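(* For every path $\omega\in\Omega$: $I_\textnormal{wCH}(\omega)\subseteq I_\textnormal{CH}(\omega)\subseteq I_\textnormal{C}(\omega)$, $I_\textnormal{wCH}(\omega)\subseteq I_\textnormal{S}(\omega)\subseteq I_\textnormal{C}(\omega)$, and $I_\textnormal{C}(\omega)\subseteq I_\textnormal{wML}(\omega)\subseteq I_\textnormal{ML}(\omega)$.
   Context: $\mathcal{X}=\{0,1\}$; $\Omega=\mathcal{X}^{\mathbb{N}}$ (paths); $\mathbb{S}=\bigcup_{n\ge0}\mathcal X^n$ (situations), $\square$ empty string, $|s|$ length, $\omega_{1:n}=(\omega_1,\dots,\omega_n)$, $\omega_{1:0}=\square$. $\mathcal I$: nonempty closed intervals $I\subseteq[0,1]$ (interval forecasts). For $f:\mathcal X\to\mathbb R$, $\overline E_I(f)=\max_{p\in I}[pf(1)+(1-p)f(0)]$. A test supermartingale for $I$ is $T:\mathbb S\to\mathbb R_{\ge0}$ with $T(\square)=1$ and $\overline E_I(T(s\,\cdot)-T(s))\le0$ for all $s$. Real maps on countable effectively encoded sets are computable if recursively approximable to within $2^{-n}$ by rationals, and lower semicomputable if they are limits of recursive non-decreasing rational sequences. A multiplier process $D$ maps situations to gambles and generates $D^{\circledcirc}(x_1,\dots,x_n)=\prod_{k=0}^{n-1}D(x_{1:k})(x_{k+1})$; it is lower semicomputable if $(s,x)\mapsto D(s)(x)$ is. For a path $\omega$ and $I\in\mathcal I$: ML-random if no lower semicomputable test supermartingale $T$ for $I$ has $\limsup_nT(\omega_{1:n})=\infty$; wML-random if no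 test supermartingale for $I$ of the form $D^{\circledcirc}$, $D$ lower semicomputable, has this; C-random if no computable test supermartingale for $I$ has this; S-random if there is no computable test supermartingale $T$ for $I$ with a computable non-decreasing unbounded $\tau:\mathbb N_0\to\mathbb R_{\ge0}$ satisfying $\limsup_n[T(\omega_{1:n})-\tau(n)]\ge0$; CH-random (resp. wCH-random) if for every recursive (resp. recursive temporal, i.e. depending only on $|s|$) $S:\mathbb S\to\{0,1\}$ with $\sum_{k=0}^{n-1}S(\omega_{1:k})\to\infty$, the relative frequencies $\frac{\sum_{k<n}S(\omega_{1:k})\omega_{k+1}}{\sum_{k<n}S(\omega_{1:k})}$ have liminf $\ge\min I$ and limsup $\le\max I$. $\mathcal I_\textnormal{R}(\omega)=\{I\in\mathcal I:\omega\text{ R-random for }I\}$, $I_\textnormal{R}(\omega)=\bigcap_{I\in\mathcal I_\textnormal{R}(\omega)}I$. *)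

theory Defs
  imports "HOL-Analysis.Analysis" "HOL-Library.Nat_Bijection"
begin

datatype recf = Zero | Succ | Proj nat | Comp recf "recf list" | Prim recf recf | Mu recf

inductive evalr :: "recf \<Rightarrow> nat list \<Rightarrow> nat \<Rightarrow> bool" where
  ev_zero: "evalr Zero xs 0"
| ev_succ: "evalr Succ (x # xs) (Suc x)"
| ev_proj: "i < length xs \<Longrightarrow> evalr (Proj i) xs (xs ! i)"
| ev_comp: "length ys = length gs \<Longrightarrow> (\<forall>i < length gs. evalr (gs ! i) xs (ys ! i))
            \<Longrightarrow> evalr f ys z \<Longrightarrow> evalr (Comp f gs) xs z"
| ev_prim0: "evalr f xs y \<Longrightarrow> evalr (Prim f g) (0 # xs) y"
| ev_primS: "evalr (Prim f g) (n # xs) y \<Longrightarrow> evalr g (y # n # xs) z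
            \<Longrightarrow> evalr (Prim f g) (Suc n # xs) z"
| ev_mu: "evalr f (n # xs) 0 \<Longrightarrow> (\<forall>m < n. \<exists>y. 0 < y \<and> evalr f (m # xs) y)
            \<Longrightarrow> evalr (Mu f) xs n"

definition recursive1 :: "(nat \<Rightarrow> nat) \<Rightarrow> bool" where
  "recursive1 f \<longleftrightarrow> (\<exists>c. \<forall>a. evalr c [a] (f a))"

definition recursive2 :: "(nat \<Rightarrow> nat \<Rightarrow> nat) \<Rightarrow> bool" where
  "recursive2 f \<longleftrightarrow> (\<exists>c. \<forall>a b. evalr c [a, b] (f a b))"

text \<open>Bijective binary encoding of situations (binary strings) by naturals.\<close>
fun enc_sit :: "bool list \<Rightarrow> nat" where
  "enc_sit [] = 0"
| "enc_sit (b # xs) = 2 * enc_sit xs + (if b then 2 else 1)"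

definition enc_sit_out :: "bool list \<times> bool \<Rightarrow> nat" where
  "enc_sit_out p = prod_encode (enc_sit (fst p), (if snd p then 1 else 0))"

text \<open>Decoding naturals to rationals (surjective onto the rationals).\<close>
definition rat_dec :: "nat \<Rightarrow> real" where
  "rat_dec n = (case prod_decode n of (a, b) \<Rightarrow> real_of_int (int_decode a) / real (Suc b))"

definition computable_real :: "('a \<Rightarrow> nat) \<Rightarrow> ('a \<Rightarrow> real) \<Rightarrow> bool" where
  "computable_real code f \<longleftrightarrow>
     (\<exists>q. recursive2 q \<and> (\<forall>a n. \<bar>f a - rat_dec (q (code a) n)\<bar> \<le> 1 / 2 ^ n))"

definition lower_semicomputable :: "('a \<Rightarrow> nat) \<Rightarrow> ('a \<Rightarrow> real) \<Rightarrow> bool" where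
  "lower_semicomputable code f \<longleftrightarrow>
     (\<exists>q. recursive2 q \<and> (\<forall>a. incseq (\<lambda>n. rat_dec (q (code a) n))
                           \<and> (\<lambda>n. rat_dec (q (code a) n)) \<longlonglongrightarrow> f a))"

definition recursive_sel :: "(bool list \<Rightarrow> bool) \<Rightarrow> bool" where
  "recursive_sel S \<longleftrightarrow> (\<exists>g. recursive1 g \<and> (\<forall>s. g (enc_sit s) = (if S s then 1 else 0)))"

definition temporal :: "(bool list \<Rightarrow> bool) \<Rightarrow> bool" where
  "temporal S \<longleftrightarrow> (\<forall>s t. length s = length t \<longrightarrow> S s = S t)"

text \<open>A path is \<omega> :: nat \<Rightarrow> bool, with \<omega> k standing for \<omega>_{k+1}; outcome 1 = True.\<close>
definition prefix :: "(nat \<Rightarrow> bool) \<Rightarrow> nat \<Rightarrow> bool list" where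
  "prefix \<omega> n = map \<omega> [0..<n]"

definition interval_forecasts :: "real set set" where
  "interval_forecasts = {I. \<exists>a b. 0 \<le> a \<and> a \<le> b \<and> b \<le> 1 \<and> I = {a..b}}"

definition upper_exp :: "real set \<Rightarrow> (bool \<Rightarrow> real) \<Rightarrow> real" where
  "upper_exp I f = Sup ((\<lambda>p. p * f True + (1 - p) * f False) ` I)"

definition test_supermartingale :: "real set \<Rightarrow> (bool list \<Rightarrow> real) \<Rightarrow> bool" where
  "test_supermartingale I T \<longleftrightarrow>
     T [] = 1 \<and> (\<forall>s. 0 \<le> T s) \<and> (\<forall>s. upper_exp I (\<lambda>x. T (s @ [x]) - T s) \<le> 0)"

definition mult_gen :: "(bool list \<Rightarrow> bool \<Rightarrow> real) \<Rightarrow> bool list \<Rightarrow> real" where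
  "mult_gen D xs = (\<Prod>k<length xs. D (take k xs) (xs ! k))"

definition MartinLoef_random :: "(nat \<Rightarrow> bool) \<Rightarrow> real set \<Rightarrow> bool" where
  "MartinLoef_random \<omega> I \<longleftrightarrow> \<not> (\<exists>T. test_supermartingale I T \<and> lower_semicomputable enc_sit T
       \<and> limsup (\<lambda>n. ereal (T (prefix \<omega> n))) = \<infinity>)"

definition weak_MartinLoef_random :: "(nat \<Rightarrow> bool) \<Rightarrow> real set \<Rightarrow> bool" where
  "weak_MartinLoef_random \<omega> I \<longleftrightarrow> \<not> (\<exists>D. test_supermartingale I (mult_gen D)
       \<and> lower_semicomputable enc_sit_out (\<lambda>(s, x). D s x)
       \<and> limsup (\<lambda>n. ereal (mult_gen D (prefix \<omega> n))) = \<infinity>)"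

definition C_random :: "(nat \<Rightarrow> bool) \<Rightarrow> real set \<Rightarrow> bool" where
  "C_random \<omega> I \<longleftrightarrow> \<not> (\<exists>T. test_supermartingale I T \<and> computable_real enc_sit T
       \<and> limsup (\<lambda>n. ereal (T (prefix \<omega> n))) = \<infinity>)"

definition S_random :: "(nat \<Rightarrow> bool) \<Rightarrow> real set \<Rightarrow> bool" where
  "S_random \<omega> I \<longleftrightarrow> \<not> (\<exists>T \<tau>. test_supermartingale I T \<and> computable_real enc_sit T
       \<and> computable_real id \<tau> \<and> (\<forall>n. 0 \<le> \<tau> n) \<and> mono \<tau> \<and> \<not> bdd_above (range \<tau>)
       \<and> limsup (\<lambda>n. ereal (T (prefix \<omega> n) - \<tau> n)) \<ge> 0)"

definition sel_count :: "(bool list \<Rightarrow> bool) \<Rightarrow> (nat \<Rightarrow> bool) \<Rightarrow> nat \<Rightarrow> real" where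
  "sel_count S \<omega> n = (\<Sum>k<n. of_bool (S (prefix \<omega> k)))"

definition rel_freq :: "(bool list \<Rightarrow> bool) \<Rightarrow> (nat \<Rightarrow> bool) \<Rightarrow> nat \<Rightarrow> real" where
  "rel_freq S \<omega> n = (\<Sum>k<n. of_bool (S (prefix \<omega> k)) * of_bool (\<omega> k)) / sel_count S \<omega> n"

definition freq_ok :: "(bool list \<Rightarrow> bool) \<Rightarrow> (nat \<Rightarrow> bool) \<Rightarrow> real set \<Rightarrow> bool" where
  "freq_ok S \<omega> I \<longleftrightarrow>
     (filterlim (sel_count S \<omega>) at_top sequentially \<longrightarrow>
       liminf (\<lambda>n. ereal (rel_freq S \<omega> n)) \<ge> ereal (Inf I)
       \<and> limsup (\<lambda>n. ereal (rel_freq S \<omega> n)) \<le> ereal (Sup I))"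

definition CH_random :: "(nat \<Rightarrow> bool) \<Rightarrow> real set \<Rightarrow> bool" where
  "CH_random \<omega> I \<longleftrightarrow> (\<forall>S. recursive_sel S \<longrightarrow> freq_ok S \<omega> I)"

definition wCH_random :: "(nat \<Rightarrow> bool) \<Rightarrow> real set \<Rightarrow> bool" where
  "wCH_random \<omega> I \<longleftrightarrow> (\<forall>S. recursive_sel S \<and> temporal S \<longrightarrow> freq_ok S \<omega> I)"

text \<open>I_R(\<omega>): intersection of all interval forecasts for which \<omega> is R-random.\<close>
definition I_of :: "((nat \<Rightarrow> bool) \<Rightarrow> real set \<Rightarrow> bool) \<Rightarrow> (nat \<Rightarrow> bool) \<Rightarrow> real set" where
  "I_of R \<omega> = \<Inter> {I \<in> interval_forecasts. R \<omega> I}"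

end

(* Each inclusion I_R(omega) <= I_R'(omega) comes from the implication "R'-random for I implies
   R-random for I" for a fixed forecast I.  ML implies wML: a lower semicomputable multiplier
   process generates a lower semicomputable test supermartingale, as products of increasing
   nonnegative approximations increase.  wML implies C: a computable T may be replaced by
   (T + 1) / 2, whose multipliers (T (s x) + 1) / (T s + 1) are lower semicomputable because their
   denominators stay away from 0.  C implies S and CH implies wCH trivially.  C implies CH and
   S implies wCH: if the relative frequency of ones along a recursive selection frequently exceeds
   max I by a margin, betting the rational factors 1 + (1 - b) / L on a selected one and
   1 - b / L on a selected zero is a computable test supermartingale that frequently reaches
   (1 + 1 / L^2)^N after N selected rounds; N tends to infinity, and for a temporal selection
   (1 + 1 / L^2)^N - 1 is a computable function of the time alone. *)

theory Submission
  imports Defs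
begin

section \<open>Total recursive functions on argument lists\<close>

definition recfn :: "nat \<Rightarrow> (nat list \<Rightarrow> nat) \<Rightarrow> bool" where
  "recfn n f \<longleftrightarrow> (\<exists>c. \<forall>xs. length xs = n \<longrightarrow> evalr c xs (f xs))"

lemma recfn_cong: "recfn n f \<Longrightarrow> (\<And>xs. length xs = n \<Longrightarrow> f xs = g xs) \<Longrightarrow> recfn n g"
  unfolding recfn_def by metis

lemma recfn_proj: "i < n \<Longrightarrow> recfn n (\<lambda>xs. xs ! i)"
  unfolding recfn_def using ev_proj by metis

lemma recfn_proj_drop: "k + i < n \<Longrightarrow> recfn n (\<lambda>xs. drop k xs ! i)"
  by (rule recfn_cong[OF recfn_proj[of "k + i"]]) simp_all

lemma recfn_comp:
  assumes "recfn k g" "length hs = k" "\<forall>h\<in>set hs. recfn n h"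
  shows "recfn n (\<lambda>xs. g (map (\<lambda>h. h xs) hs))"
proof -
  from assms(1) obtain cg where cg: "\<forall>xs. length xs = k \<longrightarrow> evalr cg xs (g xs)"
    unfolding recfn_def by blast
  from assms(3) obtain ch where ch: "\<forall>h\<in>set hs. \<forall>xs. length xs = n \<longrightarrow> evalr (ch h) xs (h xs)"
    unfolding recfn_def by (metis bchoice)
  have "evalr (Comp cg (map ch hs)) xs (g (map (\<lambda>h. h xs) hs))" if "length xs = n" for xs
    by (rule ev_comp[where ys = "map (\<lambda>h. h xs) hs"]) (use ch cg assms(2) that in auto)
  then show ?thesis unfolding recfn_def by blast
qed

lemma recfn_comp1: "recfn 1 g \<Longrightarrow> recfn n h \<Longrightarrow> recfn n (\<lambda>xs. g [h xs])"
  using recfn_comp[of 1 g "[h]" n] by simp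

lemma recfn_comp2: "recfn 2 g \<Longrightarrow> recfn n h1 \<Longrightarrow> recfn n h2 \<Longrightarrow> recfn n (\<lambda>xs. g [h1 xs, h2 xs])"
  using recfn_comp[of 2 g "[h1, h2]" n] by simp

lemma recfn_Suc: "recfn n f \<Longrightarrow> recfn n (\<lambda>xs. Suc (f xs))"
proof -
  have "recfn 1 (\<lambda>xs. Suc (hd xs))"
    unfolding recfn_def
    by (intro exI[of _ Succ] allI impI) (auto simp: length_Suc_conv intro: ev_succ)
  from recfn_comp1[OF this] show "recfn n f \<Longrightarrow> recfn n (\<lambda>xs. Suc (f xs))"
    by simp
qed

lemma recfn_const: "recfn n (\<lambda>xs. c)"
proof (induction c)
  case 0
  show ?case unfolding recfn_def using ev_zero by blast
qed (rule recfn_Suc)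

lemma recfn_prim:
  assumes "recfn n f" "recfn (Suc (Suc n)) g"
  shows "recfn (Suc n) (\<lambda>ys. rec_nat (f (tl ys)) (\<lambda>m y. g (y # m # tl ys)) (hd ys))"
proof -
  from assms obtain cf cg where cf: "\<forall>xs. length xs = n \<longrightarrow> evalr cf xs (f xs)"
    and cg: "\<forall>xs. length xs = Suc (Suc n) \<longrightarrow> evalr cg xs (g xs)"
    unfolding recfn_def by blast
  have *: "evalr (Prim cf cg) (m # xs) (rec_nat (f xs) (\<lambda>m y. g (y # m # xs)) m)"
    if "length xs = n" for m xs
  proof (induction m)
    case 0
    then show ?case using cf that by (simp add: ev_prim0)
  next
    case (Suc m)
    then show ?case using cg that by (auto intro: ev_primS)
  qed
  show ?thesis unfolding recfn_def
    by (intro exI[of _ "Prim cf cg"] allI impI) (use * in \<open>auto simp: length_Suc_conv\<close>)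
qed

(* As for Prim, the step function receives the previous value before the counter. *)
lemma recfn_rec:
  assumes "recfn n f" "recfn (Suc (Suc n)) (\<lambda>ys. g (ys ! 1) (ys ! 0) (drop 2 ys))" "recfn n k"
  shows "recfn n (\<lambda>xs. rec_nat (f xs) (\<lambda>m y. g m y xs) (k xs))"
proof -
  have "recfn n (\<lambda>xs. (\<lambda>ys. rec_nat (f (tl ys)) (\<lambda>m y. g m y (tl ys)) (hd ys))
                (map (\<lambda>h. h xs) (k # map (\<lambda>i xs. xs ! i) [0..<n])))"
    by (rule recfn_comp[of "Suc n"]) (use recfn_prim[OF assms(1,2)] assms(3) in \<open>auto intro: recfn_proj\<close>)
  then show ?thesis
  proof (rule recfn_cong)
    fix xs :: "nat list"
    assume "length xs = n"
    then have "map (\<lambda>h. h xs) (map (\<lambda>i xs. xs ! i) [0..<n]) = xs"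
      by (simp add: comp_def) (metis map_nth)
    then show "rec_nat (f (tl (map (\<lambda>h. h xs) (k # map (\<lambda>i xs. xs ! i) [0..<n]))))
        (\<lambda>m y. g m y (tl (map (\<lambda>h. h xs) (k # map (\<lambda>i xs. xs ! i) [0..<n]))))
        (hd (map (\<lambda>h. h xs) (k # map (\<lambda>i xs. xs ! i) [0..<n])))
      = rec_nat (f xs) (\<lambda>m y. g m y xs) (k xs)" by simp
  qed
qed

lemma recfn_drop1:
  assumes "recfn n f"
  shows "recfn (Suc n) (\<lambda>xs. f (drop 1 xs))"
proof -
  have "recfn (Suc n) (\<lambda>xs. f (map (\<lambda>h. h xs) (map (\<lambda>i xs. xs ! Suc i) [0..<n])))"
    by (rule recfn_comp[OF assms]) (auto intro: recfn_proj)
  then show ?thesis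
  proof (rule recfn_cong)
    fix xs :: "nat list"
    assume "length xs = Suc n"
    then have "map (\<lambda>i. xs ! Suc i) [0..<n] = drop 1 xs"
      by (intro nth_equalityI) auto
    then show "f (map (\<lambda>h. h xs) (map (\<lambda>i xs. xs ! Suc i) [0..<n])) = f (drop 1 xs)"
      by (simp add: comp_def)
  qed
qed

lemma recfn_add: "recfn n f \<Longrightarrow> recfn n g \<Longrightarrow> recfn n (\<lambda>xs. f xs + g xs)"
proof -
  have "recfn 2 (\<lambda>xs. rec_nat (xs ! 1) (\<lambda>m y. Suc y) (xs ! 0))"
    by (rule recfn_rec) (intro recfn_Suc recfn_proj, simp)+
  moreover have "rec_nat b (\<lambda>m y. Suc y) a = a + b" for a b :: nat
    by (induct a) auto
  ultimately have "recfn 2 (\<lambda>xs. xs ! 0 + xs ! 1)" by (rule_tac recfn_cong) auto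
  from recfn_comp2[OF this] show "recfn n f \<Longrightarrow> recfn n g \<Longrightarrow> recfn n (\<lambda>xs. f xs + g xs)"
    by simp
qed

lemma recfn_mult: "recfn n f \<Longrightarrow> recfn n g \<Longrightarrow> recfn n (\<lambda>xs. f xs * g xs)"
proof -
  have "recfn 2 (\<lambda>xs. rec_nat 0 (\<lambda>m y. y + xs ! 1) (xs ! 0))"
    by (rule recfn_rec) (intro recfn_add recfn_proj recfn_proj_drop recfn_const; simp)+
  moreover have "rec_nat 0 (\<lambda>m y. y + b) a = a * b" for a b :: nat
    by (induct a) auto
  ultimately have "recfn 2 (\<lambda>xs. xs ! 0 * xs ! 1)" by (rule_tac recfn_cong) auto
  from recfn_comp2[OF this] show "recfn n f \<Longrightarrow> recfn n g \<Longrightarrow> recfn n (\<lambda>xs. f xs * g xs)"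
    by simp
qed

lemma recfn_pow: "recfn n f \<Longrightarrow> recfn n g \<Longrightarrow> recfn n (\<lambda>xs. f xs ^ g xs)"
proof -
  have "recfn 2 (\<lambda>xs. rec_nat 1 (\<lambda>m y. y * xs ! 0) (xs ! 1))"
    by (rule recfn_rec) (intro recfn_mult recfn_proj recfn_proj_drop recfn_const; simp)+
  moreover have "rec_nat 1 (\<lambda>m y. y * a) b = a ^ b" for a b :: nat
    by (induct b) auto
  ultimately have "recfn 2 (\<lambda>xs. xs ! 0 ^ xs ! 1)" by (rule_tac recfn_cong) auto
  from recfn_comp2[OF this] show "recfn n f \<Longrightarrow> recfn n g \<Longrightarrow> recfn n (\<lambda>xs. f xs ^ g xs)"
    by simp
qed

lemma recfn_diff: "recfn n f \<Longrightarrow> recfn n g \<Longrightarrow> recfn n (\<lambda>xs. f xs - g xs)"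
proof -
  have "recfn 1 (\<lambda>xs. rec_nat 0 (\<lambda>m y. m) (xs ! 0))"
    by (rule recfn_rec) (intro recfn_proj recfn_const; simp)+
  moreover have "rec_nat 0 (\<lambda>m y. m) a = a - 1" for a :: nat
    by (induct a) auto
  ultimately have "recfn 1 (\<lambda>xs. xs ! 0 - 1)" by (rule_tac recfn_cong) auto
  from recfn_comp1[OF this recfn_proj[of 0 4]] have "recfn 4 (\<lambda>xs. xs ! 0 - 1)"
    by simp
  then have "recfn 2 (\<lambda>xs. rec_nat (xs ! 0) (\<lambda>m y. y - 1) (xs ! 1))"
    by (intro recfn_rec recfn_proj; simp)
  moreover have "rec_nat a (\<lambda>m y. y - 1) b = a - b" for a b :: nat
    by (induct b) auto
  ultimately have "recfn 2 (\<lambda>xs. xs ! 0 - xs ! 1)" by (rule_tac recfn_cong) auto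
  from recfn_comp2[OF this] show "recfn n f \<Longrightarrow> recfn n g \<Longrightarrow> recfn n (\<lambda>xs. f xs - g xs)"
    by simp
qed

definition recpred :: "nat \<Rightarrow> (nat list \<Rightarrow> bool) \<Rightarrow> bool" where
  "recpred n P \<longleftrightarrow> recfn n (\<lambda>xs. of_bool (P xs))"

lemma recfn_If:
  assumes "recpred n P" "recfn n f" "recfn n g"
  shows "recfn n (\<lambda>xs. if P xs then f xs else g xs)"
proof -
  have "recfn n (\<lambda>xs. of_bool (P xs) * f xs + (1 - of_bool (P xs)) * g xs)"
    using assms unfolding recpred_def by (intro recfn_add recfn_mult recfn_diff recfn_const)
  then show ?thesis by (rule recfn_cong) simp
qed

lemma recpred_le: "recfn n f \<Longrightarrow> recfn n g \<Longrightarrow> recpred n (\<lambda>xs. f xs \<le> g xs)"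
  unfolding recpred_def by (rule recfn_cong[of n "\<lambda>xs. 1 - (f xs - g xs)"]) (intro recfn_diff recfn_const, auto)

lemma recpred_less: "recfn n f \<Longrightarrow> recfn n g \<Longrightarrow> recpred n (\<lambda>xs. f xs < g xs)"
  using recpred_le[OF recfn_Suc, of n f g] by (simp add: Suc_le_eq)

lemma recpred_eq: "recfn n f \<Longrightarrow> recfn n g \<Longrightarrow> recpred n (\<lambda>xs. f xs = g xs)"
  unfolding recpred_def
  by (rule recfn_cong[of n "\<lambda>xs. 1 - ((f xs - g xs) + (g xs - f xs))"]) (intro recfn_diff recfn_add recfn_const, auto)

lemma recpred_not: "recpred n P \<Longrightarrow> recpred n (\<lambda>xs. \<not> P xs)"
  unfolding recpred_def by (rule recfn_cong[of n "\<lambda>xs. 1 - of_bool (P xs)"]) (intro recfn_diff recfn_const, auto)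

lemma recpred_conj: "recpred n P \<Longrightarrow> recpred n Q \<Longrightarrow> recpred n (\<lambda>xs. P xs \<and> Q xs)"
  unfolding recpred_def by (rule recfn_cong[of n "\<lambda>xs. of_bool (P xs) * of_bool (Q xs)"]) (intro recfn_mult, auto)

lemma recpred_disj: "recpred n P \<Longrightarrow> recpred n Q \<Longrightarrow> recpred n (\<lambda>xs. P xs \<or> Q xs)"
  using recpred_not[OF recpred_conj[OF recpred_not recpred_not]] by simp

lemma recfn_Least:
  assumes "recpred (Suc n) (\<lambda>ys. P (ys ! 0) (drop 1 ys))"
    and "\<And>xs. length xs = n \<Longrightarrow> \<exists>m. P m xs"
  shows "recfn n (\<lambda>xs. LEAST m. P m xs)"
proof -
  from recpred_not[OF assms(1)] obtain cf
    where cf0: "\<forall>ys. length ys = Suc n \<longrightarrow> evalr cf ys (of_bool (\<not> P (ys ! 0) (drop 1 ys)))"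
    unfolding recpred_def recfn_def by blast
  have cf: "evalr cf (m # xs) (of_bool (\<not> P m xs))" if "length xs = n" for m xs
    using cf0[rule_format, of "m # xs"] that by simp
  have "evalr (Mu cf) xs (LEAST m. P m xs)" if "length xs = n" for xs
  proof (rule ev_mu)
    have "P (LEAST m. P m xs) xs"
      by (rule LeastI_ex) (rule assms(2)[OF that])
    then show "evalr cf ((LEAST m. P m xs) # xs) 0"
      using cf[OF that, of "LEAST m. P m xs"] by simp
    show "\<forall>m < (LEAST m. P m xs). \<exists>y. 0 < y \<and> evalr cf (m # xs) y"
    proof (intro allI impI)
      fix m
      assume "m < (LEAST m. P m xs)"
      then have "\<not> P m xs" by (rule not_less_Least)
      then show "\<exists>y. 0 < y \<and> evalr cf (m # xs) y"
        using cf[OF that, of m] by (intro exI[of _ 1]) simp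
    qed
  qed
  then show ?thesis unfolding recfn_def by blast
qed

lemma recfn_div:
  assumes "recfn n f" "recfn n g"
  shows "recfn n (\<lambda>xs. f xs div g xs)"
proof -
  have "recfn 2 (\<lambda>xs. LEAST q. xs ! 1 = 0 \<or> xs ! 0 < Suc q * xs ! 1)"
  proof (rule recfn_Least)
    show "recpred (Suc 2) (\<lambda>ys. drop 1 ys ! 1 = 0 \<or> drop 1 ys ! 0 < Suc (ys ! 0) * drop 1 ys ! 1)"
      by (intro recpred_disj recpred_eq recpred_less recfn_mult recfn_Suc recfn_proj recfn_proj_drop
          recfn_const; simp)
    show "\<exists>q. xs ! 1 = 0 \<or> xs ! 0 < Suc q * xs ! 1" for xs :: "nat list"
      by (rule exI[of _ "xs ! 0"]) (cases "xs ! 1", auto)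
  qed
  moreover have "(LEAST q. b = 0 \<or> a < Suc q * b) = a div b" for a b :: nat
  proof (cases "b = 0")
    case False
    show ?thesis
    proof (rule Least_equality)
      show "b = 0 \<or> a < Suc (a div b) * b"
        using False div_less_iff_less_mult by blast
      show "a div b \<le> q" if "b = 0 \<or> a < Suc q * b" for q
        using that False less_mult_imp_div_less[of a "Suc q" b] by simp
    qed
  qed simp
  ultimately have "recfn 2 (\<lambda>xs. xs ! 0 div xs ! 1)"
    by (rule_tac recfn_cong) auto
  from recfn_comp2[OF this assms] show ?thesis by simp
qed

lemma recpred_even:
  assumes "recfn n f"
  shows "recpred n (\<lambda>xs. even (f xs))"
proof -
  have "recpred n (\<lambda>xs. 2 * (f xs div 2) = f xs)"
    using assms by (intro recpred_eq recfn_mult recfn_div recfn_const)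
  moreover have "(2 * (m div 2) = m) = even m" for m :: nat
    by presburger
  ultimately show ?thesis by simp
qed

section \<open>Coding of pairs, situations and rationals\<close>

lemma recfn_triangle:
  assumes "recfn n f"
  shows "recfn n (\<lambda>xs. triangle (f xs))"
proof -
  have "recfn n (\<lambda>xs. f xs * Suc (f xs) div 2)"
    using assms by (intro recfn_div recfn_mult recfn_Suc recfn_const)
  then show ?thesis by (rule recfn_cong) (simp add: triangle_def)
qed

lemma recfn_prod_encode:
  assumes "recfn n f" "recfn n g"
  shows "recfn n (\<lambda>xs. prod_encode (f xs, g xs))"
proof -
  have "recfn n (\<lambda>xs. triangle (f xs + g xs) + f xs)"
    using assms by (intro recfn_add recfn_triangle)
  then show ?thesis by (rule recfn_cong) (simp add: prod_encode_def)
qed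

definition prod_diag :: "nat \<Rightarrow> nat" where
  "prod_diag n = (LEAST w. n < triangle (Suc w))"

lemma triangle_prod_diag: "triangle (prod_diag n) \<le> n \<and> n < triangle (Suc (prod_diag n))"
proof
  have "n \<le> triangle n" by (induct n) auto
  then have "n < triangle (Suc n)" by simp
  then show "n < triangle (Suc (prod_diag n))"
    unfolding prod_diag_def by (rule LeastI)
  show "triangle (prod_diag n) \<le> n"
  proof (cases "prod_diag n")
    case (Suc w)
    then have "\<not> n < triangle (Suc w)"
      unfolding prod_diag_def by (intro not_less_Least) simp
    then show ?thesis using Suc by simp
  qed simp
qed

lemma prod_decode_eq_prod_diag:
  "prod_decode n = (n - triangle (prod_diag n), prod_diag n - (n - triangle (prod_diag n)))"
proof -
  define w where "w = prod_diag n"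
  define m where "m = n - triangle w"
  have "n = triangle w + m" "m \<le> w"
    using triangle_prod_diag[of n] unfolding m_def w_def by auto
  then have "prod_decode n = (m, w - m)"
    by (simp add: prod_decode_triangle_add prod_decode_aux.simps)
  then show ?thesis unfolding m_def w_def .
qed

lemma recfn_prod_diag:
  assumes "recfn n f"
  shows "recfn n (\<lambda>xs. prod_diag (f xs))"
proof -
  have "recfn 1 (\<lambda>xs. LEAST w. xs ! 0 < triangle (Suc w))"
  proof (rule recfn_Least)
    show "recpred (Suc 1) (\<lambda>ys. drop 1 ys ! 0 < triangle (Suc (ys ! 0)))"
      by (intro recpred_less recfn_triangle recfn_Suc recfn_proj recfn_proj_drop; simp)
    show "\<exists>w. xs ! 0 < triangle (Suc w)" for xs :: "nat list"
      using triangle_prod_diag[of "xs ! 0"] by (intro exI[of _ "prod_diag (xs ! 0)"]) simp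
  qed
  from recfn_comp1[OF this assms] show ?thesis by (simp add: prod_diag_def)
qed

lemma recfn_prod_decode:
  assumes "recfn n f"
  shows "recfn n (\<lambda>xs. fst (prod_decode (f xs)))" "recfn n (\<lambda>xs. snd (prod_decode (f xs)))"
proof -
  have "recfn n (\<lambda>xs. f xs - triangle (prod_diag (f xs)))"
    using assms by (intro recfn_diff recfn_triangle recfn_prod_diag)
  then show "recfn n (\<lambda>xs. fst (prod_decode (f xs)))"
    by (rule recfn_cong) (simp add: prod_decode_eq_prod_diag)
  have "recfn n (\<lambda>xs. prod_diag (f xs) - (f xs - triangle (prod_diag (f xs))))"
    using assms by (intro recfn_diff recfn_triangle recfn_prod_diag)
  then show "recfn n (\<lambda>xs. snd (prod_decode (f xs)))"
    by (rule recfn_cong) (simp add: prod_decode_eq_prod_diag)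
qed

lemma recfn_sum:
  assumes "recfn (Suc n) (\<lambda>ys. F (ys ! 0) (drop 1 ys))" "recfn n L"
  shows "recfn n (\<lambda>xs. \<Sum>k<L xs. F k xs)"
proof -
  have "recfn (Suc (Suc n)) (\<lambda>ys. F (ys ! 1) (drop 2 ys))"
    using recfn_drop1[OF assms(1)] by (rule recfn_cong) (auto simp: numeral_2_eq_2)
  then have "recfn (Suc (Suc n)) (\<lambda>ys. ys ! 0 + F (ys ! 1) (drop 2 ys))"
    by (intro recfn_add recfn_proj) simp_all
  then have "recfn n (\<lambda>xs. rec_nat 0 (\<lambda>m y. y + F m xs) (L xs))"
    by (intro recfn_rec recfn_const assms(2)) simp
  moreover have "rec_nat 0 (\<lambda>m y. y + F m xs) l = (\<Sum>k<l. F k xs)" for l xs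
    by (induct l) (auto simp: add.commute)
  ultimately show ?thesis by (rule_tac recfn_cong) auto
qed

lemma recfn_prod:
  assumes "recfn (Suc n) (\<lambda>ys. F (ys ! 0) (drop 1 ys))" "recfn n L"
  shows "recfn n (\<lambda>xs. \<Prod>k<L xs. F k xs)"
proof -
  have "recfn (Suc (Suc n)) (\<lambda>ys. F (ys ! 1) (drop 2 ys))"
    using recfn_drop1[OF assms(1)] by (rule recfn_cong) (auto simp: numeral_2_eq_2)
  then have "recfn (Suc (Suc n)) (\<lambda>ys. ys ! 0 * F (ys ! 1) (drop 2 ys))"
    by (intro recfn_mult recfn_proj) simp_all
  then have "recfn n (\<lambda>xs. rec_nat 1 (\<lambda>m y. y * F m xs) (L xs))"
    by (intro recfn_rec recfn_const assms(2)) simp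
  moreover have "rec_nat 1 (\<lambda>m y. y * F m xs) l = (\<Prod>k<l. F k xs)" for l xs
    by (induct l) (auto simp: mult.commute)
  ultimately show ?thesis by (rule_tac recfn_cong) auto
qed

lemma recfn_recursive1: "recursive1 g \<Longrightarrow> recfn n f \<Longrightarrow> recfn n (\<lambda>xs. g (f xs))"
proof -
  assume "recursive1 g"
  then obtain c where "\<forall>a. evalr c [a] (g a)"
    unfolding recursive1_def by blast
  then have "recfn 1 (\<lambda>xs. g (hd xs))"
    unfolding recfn_def by (intro exI[of _ c]) (auto simp: length_Suc_conv)
  from recfn_comp1[OF this] show "recfn n f \<Longrightarrow> recfn n (\<lambda>xs. g (f xs))" by simp
qed

lemma recfn_recursive2:
  "recursive2 g \<Longrightarrow> recfn n f1 \<Longrightarrow> recfn n f2 \<Longrightarrow> recfn n (\<lambda>xs. g (f1 xs) (f2 xs))"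
proof -
  assume "recursive2 g"
  then obtain c where "\<forall>a b. evalr c [a, b] (g a b)"
    unfolding recursive2_def by blast
  then have "recfn 2 (\<lambda>xs. g (xs ! 0) (xs ! 1))"
    unfolding recfn_def by (intro exI[of _ c]) (auto simp: length_Suc_conv numeral_2_eq_2)
  from recfn_comp2[OF this]
  show "recfn n f1 \<Longrightarrow> recfn n f2 \<Longrightarrow> recfn n (\<lambda>xs. g (f1 xs) (f2 xs))" by simp
qed

lemma recursive1I: "recfn 1 (\<lambda>xs. g (xs ! 0)) \<Longrightarrow> recursive1 g"
proof -
  assume "recfn 1 (\<lambda>xs. g (xs ! 0))"
  then obtain c where "\<forall>xs. length xs = 1 \<longrightarrow> evalr c xs (g (xs ! 0))"
    unfolding recfn_def by blast
  then have "evalr c [a] (g a)" for a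
    by (drule_tac spec[of _ "[a]"]) simp
  then show ?thesis unfolding recursive1_def by blast
qed

lemma recursive2I: "recfn 2 (\<lambda>xs. g (xs ! 0) (xs ! 1)) \<Longrightarrow> recursive2 g"
proof -
  assume "recfn 2 (\<lambda>xs. g (xs ! 0) (xs ! 1))"
  then obtain c where "\<forall>xs. length xs = 2 \<longrightarrow> evalr c xs (g (xs ! 0) (xs ! 1))"
    unfolding recfn_def by blast
  then have "evalr c [a, b] (g a b)" for a b
    by (metis length_Cons list.size(3) nth_Cons_0 nth_Cons_Suc numeral_2_eq_2 One_nat_def)
  then show ?thesis unfolding recursive2_def by blast
qed

definition enc_drop :: "nat \<Rightarrow> nat \<Rightarrow> nat" where
  "enc_drop k = (\<lambda>n. (n - 1) div 2) ^^ k"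

definition enc_take :: "nat \<Rightarrow> nat \<Rightarrow> nat" where
  "enc_take k c = c - 2 ^ k * enc_drop k c"

definition enc_length :: "nat \<Rightarrow> nat" where
  "enc_length c = (LEAST k. enc_drop k c = 0)"

lemma enc_sit_append: "enc_sit (xs @ ys) = enc_sit xs + 2 ^ length xs * enc_sit ys"
  by (induct xs) auto

lemma enc_drop_enc_sit: "enc_drop k (enc_sit s) = enc_sit (drop k s)"
proof (induct k arbitrary: s)
  case (Suc k)
  have "(enc_sit s - 1) div 2 = enc_sit (drop 1 s)"
    by (cases s) auto
  then show ?case
    using Suc[of "drop 1 s"] by (simp add: enc_drop_def funpow_Suc_right del: funpow.simps)
qed (simp add: enc_drop_def)

lemma enc_take_enc_sit: "enc_take k (enc_sit s) = enc_sit (take k s)"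
proof (cases "k \<le> length s")
  case True
  then have "enc_sit s = enc_sit (take k s) + 2 ^ k * enc_sit (drop k s)"
    using enc_sit_append[of "take k s" "drop k s"] by simp
  then show ?thesis unfolding enc_take_def enc_drop_enc_sit by linarith
qed (simp add: enc_take_def enc_drop_enc_sit)

lemma enc_length_enc_sit: "enc_length (enc_sit s) = length s"
  unfolding enc_length_def
proof (rule Least_equality)
  show "enc_drop (length s) (enc_sit s) = 0"
    by (simp add: enc_drop_enc_sit)
  show "length s \<le> k" if "enc_drop k (enc_sit s) = 0" for k
    using that by (cases "drop k s") (auto simp: enc_drop_enc_sit split: if_splits)
qed

lemma nth_eq_even_enc_drop: "k < length s \<Longrightarrow> s ! k = even (enc_drop k (enc_sit s))"
  by (simp add: enc_drop_enc_sit Cons_nth_drop_Suc[symmetric])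

lemma enc_sit_replicate_False: "enc_sit (replicate k False) = 2 ^ k - 1"
proof -
  have "enc_sit (replicate k False) + 1 = 2 ^ k"
    by (induct k) auto
  then show ?thesis by simp
qed

lemma recfn_enc_drop:
  assumes "recfn n f" "recfn n g"
  shows "recfn n (\<lambda>xs. enc_drop (f xs) (g xs))"
proof -
  have "recfn 2 (\<lambda>xs. rec_nat (xs ! 1) (\<lambda>m y. (y - 1) div 2) (xs ! 0))"
    by (rule recfn_rec; (intro recfn_div recfn_diff recfn_proj recfn_const)?; simp)
  moreover have "rec_nat b (\<lambda>m y. (y - 1) div 2) a = enc_drop a b" for a b
    by (induct a) (auto simp: enc_drop_def)
  ultimately have "recfn 2 (\<lambda>xs. enc_drop (xs ! 0) (xs ! 1))"
    by (rule_tac recfn_cong) auto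
  from recfn_comp2[OF this assms] show ?thesis by simp
qed

lemma recfn_enc_take:
  "recfn n f \<Longrightarrow> recfn n g \<Longrightarrow> recfn n (\<lambda>xs. enc_take (f xs) (g xs))"
  unfolding enc_take_def by (intro recfn_diff recfn_mult recfn_pow recfn_enc_drop recfn_const)

lemma recfn_enc_length:
  assumes "recfn n f"
  shows "recfn n (\<lambda>xs. enc_length (f xs))"
proof -
  have "recfn 1 (\<lambda>xs. LEAST k. enc_drop k (xs ! 0) = 0)"
  proof (rule recfn_Least)
    show "recpred (Suc 1) (\<lambda>ys. enc_drop (ys ! 0) (drop 1 ys ! 0) = 0)"
      by (intro recpred_eq recfn_enc_drop recfn_proj recfn_proj_drop recfn_const; simp)
    have "enc_drop k c \<le> c - k" for k c
      by (induct k) (auto simp: enc_drop_def)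
    then show "\<exists>k. enc_drop k (xs ! 0) = 0" for xs :: "nat list"
      by (metis diff_self_eq_0 le_zero_eq)
  qed
  from recfn_comp1[OF this assms] show ?thesis by (simp add: enc_length_def)
qed

lemma rat_dec_prod_encode: "0 < d \<Longrightarrow> rat_dec (prod_encode (2 * p, d - 1)) = real p / real d"
  by (simp add: rat_dec_def int_decode_def sum_decode_def)

definition rat_dec_num_pos :: "nat \<Rightarrow> nat" where
  "rat_dec_num_pos r = (if even (fst (prod_decode r)) then fst (prod_decode r) div 2 else 0)"

definition rat_dec_den :: "nat \<Rightarrow> nat" where
  "rat_dec_den r = Suc (snd (prod_decode r))"

lemma max_0_rat_dec: "max 0 (rat_dec r) = real (rat_dec_num_pos r) / real (rat_dec_den r)"
  by (auto simp: rat_dec_def int_decode_def sum_decode_def rat_dec_num_pos_def rat_dec_den_def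
      max_def zero_le_divide_iff split: prod.splits)

lemma recfn_rat_dec_num_pos: "recfn n f \<Longrightarrow> recfn n (\<lambda>xs. rat_dec_num_pos (f xs))"
  unfolding rat_dec_num_pos_def
  by (intro recfn_If recpred_even recfn_div recfn_prod_decode recfn_const)

lemma recfn_rat_dec_den: "recfn n f \<Longrightarrow> recfn n (\<lambda>xs. rat_dec_den (f xs))"
  unfolding rat_dec_den_def by (intro recfn_Suc recfn_prod_decode)

section \<open>Limits and test supermartingales\<close>

lemma frequently_less_of_less_limsup:
  assumes "ereal c < limsup (\<lambda>n. ereal (f n))"
  shows "\<exists>\<^sub>F n in sequentially. c < f n"
proof (rule ccontr)
  assume "\<not> (\<exists>\<^sub>F n in sequentially. c < f n)"
  then have "\<forall>\<^sub>F n in sequentially. ereal (f n) \<le> ereal c"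
    by (simp add: not_frequently not_less)
  then have "limsup (\<lambda>n. ereal (f n)) \<le> ereal c"
    by (rule Limsup_bounded)
  with assms show False by simp
qed

lemma limsup_ereal_eq_PInf_iff:
  "limsup (\<lambda>n. ereal (f n)) = \<infinity> \<longleftrightarrow> (\<forall>B. \<exists>\<^sub>F n in sequentially. B < f n)"
proof (intro iffI allI)
  fix B
  assume "limsup (\<lambda>n. ereal (f n)) = \<infinity>"
  then show "\<exists>\<^sub>F n in sequentially. B < f n"
    by (intro frequently_less_of_less_limsup) simp
next
  assume fr: "\<forall>B. \<exists>\<^sub>F n in sequentially. B < f n"
  show "limsup (\<lambda>n. ereal (f n)) = \<infinity>"
  proof (rule ccontr)
    assume "limsup (\<lambda>n. ereal (f n)) \<noteq> \<infinity>"
    then obtain B where "limsup (\<lambda>n. ereal (f n)) < ereal B"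
      using ereal_dense2 ereal_less_PInfty by blast
    then have "\<forall>\<^sub>F n in sequentially. f n < B"
      by (auto dest: Limsup_lessD)
    with fr have "\<exists>\<^sub>F n in sequentially. B < f n \<and> f n < B"
      by (auto intro: frequently_eventually_frequently)
    then show False by (simp add: frequently_def)
  qed
qed

lemma le_limsup_of_frequently_le:
  assumes "\<exists>\<^sub>F n in sequentially. c \<le> f n"
  shows "ereal c \<le> limsup (\<lambda>n. ereal (f n))"
proof (rule ccontr)
  assume "\<not> ereal c \<le> limsup (\<lambda>n. ereal (f n))"
  then have "\<forall>\<^sub>F n in sequentially. ereal (f n) < ereal c"
    by (intro Limsup_lessD) simp
  then have "\<forall>\<^sub>F n in sequentially. f n < c"
    by simp
  with assms have "\<exists>\<^sub>F n in sequentially. c \<le> f n \<and> f n < c"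
    by (auto intro: frequently_eventually_frequently)
  then show False by (simp add: frequently_def)
qed

lemma frequently_ge_of_limsup_gt:
  assumes "\<not> limsup (\<lambda>n. ereal (f n)) \<le> ereal b"
  obtains \<beta> where "b < \<beta>" "\<exists>\<^sub>F n in sequentially. \<beta> \<le> f n"
proof -
  obtain y where y: "ereal b < y" "\<exists>\<^sub>F n in sequentially. y \<le> ereal (f n)"
    using assms unfolding Limsup_le_iff by (auto simp: not_eventually not_less)
  obtain \<beta> where \<beta>: "b < \<beta>" "ereal \<beta> \<le> y"
    using y(1) by (cases y) (auto intro: that[of "b + 1"])
  have "\<exists>\<^sub>F n in sequentially. \<beta> \<le> f n"
    using y(2) by (rule frequently_elim1) (metis \<beta>(2) ereal_less_eq(3) order.trans)
  with \<beta>(1) show ?thesis by (rule that)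
qed

lemma frequently_le_of_liminf_lt:
  assumes "\<not> ereal a \<le> liminf (\<lambda>n. ereal (f n))"
  obtains \<alpha> where "\<alpha> < a" "\<exists>\<^sub>F n in sequentially. f n \<le> \<alpha>"
proof -
  obtain y where y: "y < ereal a" "\<exists>\<^sub>F n in sequentially. ereal (f n) \<le> y"
    using assms unfolding le_Liminf_iff by (auto simp: not_eventually not_less)
  obtain \<alpha> where \<alpha>: "\<alpha> < a" "y \<le> ereal \<alpha>"
    using y(1) by (cases y) (auto intro: that[of "a - 1"])
  have "\<exists>\<^sub>F n in sequentially. f n \<le> \<alpha>"
    using y(2) by (rule frequently_elim1) (metis \<alpha>(2) ereal_less_eq(3) order.trans)
  with \<alpha>(1) show ?thesis by (rule that)
qed

lemma not_bdd_above_of_filterlim_at_top: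
  fixes f :: "nat \<Rightarrow> real"
  assumes "filterlim f at_top sequentially"
  shows "\<not> bdd_above (range f)"
proof
  assume "bdd_above (range f)"
  then obtain B where "\<And>n. f n \<le> B"
    by (auto simp: bdd_above_def)
  moreover have "\<forall>\<^sub>F n in sequentially. B + 1 \<le> f n"
    using assms unfolding filterlim_at_top by blast
  then obtain n where "B + 1 \<le> f n"
    by (auto dest: eventually_happens)
  ultimately show False
    by (metis add_le_same_cancel1 not_one_le_zero order.trans)
qed

lemma limsup_eq_PInf_of_frequently_ge:
  assumes "\<exists>\<^sub>F n in sequentially. g n \<le> f n" and "filterlim g at_top sequentially"
  shows "limsup (\<lambda>n. ereal (f n)) = \<infinity>"
  unfolding limsup_ereal_eq_PInf_iff
proof
  fix B
  have "\<forall>\<^sub>F n in sequentially. B + 1 \<le> g n"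
    using assms(2) unfolding filterlim_at_top by blast
  with assms(1) show "\<exists>\<^sub>F n in sequentially. B < f n"
    by (rule frequently_eventually_frequently[THEN frequently_elim1]) simp
qed

lemma LIMSEQ_of_dyadic_approx:
  fixes f :: "nat \<Rightarrow> real"
  assumes "\<And>n. \<bar>x - f n\<bar> \<le> 1 / 2 ^ n"
  shows "f \<longlonglongrightarrow> x"
proof (rule LIMSEQ_I)
  fix r :: real
  assume "0 < r"
  then obtain N where N: "(1 / 2) ^ N < r"
    using real_arch_pow_inv[of r "1 / 2"] by auto
  show "\<exists>N. \<forall>n\<ge>N. norm (f n - x) < r"
  proof (intro exI allI impI)
    fix n
    assume "N \<le> n"
    have "norm (f n - x) \<le> (1 / 2) ^ n"
      using assms[of n] by (simp add: abs_minus_commute power_one_over)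
    also have "\<dots> \<le> (1 / 2) ^ N"
      using \<open>N \<le> n\<close> by (intro power_decreasing) auto
    finally show "norm (f n - x) < r"
      using N by linarith
  qed
qed

lemma upper_exp_le_0_iff:
  assumes "I \<in> interval_forecasts"
  shows "upper_exp I f \<le> 0 \<longleftrightarrow> (\<forall>p\<in>I. p * f True + (1 - p) * f False \<le> 0)"
proof -
  obtain a b where ab: "0 \<le> a" "a \<le> b" "b \<le> 1" "I = {a..b}"
    using assms unfolding interval_forecasts_def by blast
  have "p * f True + (1 - p) * f False \<le> \<bar>f True\<bar> + \<bar>f False\<bar>" if "p \<in> I" for p
  proof -
    have p: "0 \<le> p" "p \<le> 1"
      using that ab by auto
    have "p * f True \<le> p * \<bar>f True\<bar>" "(1 - p) * f False \<le> (1 - p) * \<bar>f False\<bar>"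
      using p by (simp_all add: mult_left_mono)
    moreover have "p * \<bar>f True\<bar> \<le> \<bar>f True\<bar>" "(1 - p) * \<bar>f False\<bar> \<le> \<bar>f False\<bar>"
      using p by (simp_all add: mult_left_le_one_le)
    ultimately show ?thesis by linarith
  qed
  then have "bdd_above ((\<lambda>p. p * f True + (1 - p) * f False) ` I)"
    by (rule bdd_aboveI2)
  moreover have "I \<noteq> {}"
    using ab by auto
  ultimately show ?thesis
    unfolding upper_exp_def by (simp add: cSup_le_iff)
qed

lemma test_supermartingale_iff:
  assumes "I \<in> interval_forecasts"
  shows "test_supermartingale I T \<longleftrightarrow> T [] = 1 \<and> (\<forall>s. 0 \<le> T s) \<and>
    (\<forall>s. \<forall>p\<in>I. p * (T (s @ [True]) - T s) + (1 - p) * (T (s @ [False]) - T s) \<le> 0)"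
  unfolding test_supermartingale_def upper_exp_le_0_iff[OF assms] ..

section \<open>Randomness defined by test supermartingales\<close>

lemma mult_gen_Nil [simp]: "mult_gen D [] = 1"
  unfolding mult_gen_def by simp

lemma mult_gen_snoc: "mult_gen D (s @ [x]) = mult_gen D s * D s x"
  unfolding mult_gen_def by (simp add: nth_append)

lemma mult_gen_eq_max_0:
  assumes "\<And>s. 0 \<le> mult_gen D s"
  shows "mult_gen D s = mult_gen (\<lambda>s x. max 0 (D s x)) s"
proof (induct s rule: rev_induct)
  case (snoc x s)
  show ?case
  proof (cases "mult_gen D s = 0")
    case False
    then have "0 \<le> D s x"
      using assms[of s] assms[of "s @ [x]"] by (simp add: mult_gen_snoc zero_le_mult_iff)
    then show ?thesis using snoc by (simp add: mult_gen_snoc)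
  qed (use snoc in \<open>simp add: mult_gen_snoc\<close>)
qed simp

lemma enc_sit_out_take_nth:
  assumes "k < length s"
  shows "enc_sit_out (take k s, s ! k)
    = prod_encode (enc_take k (enc_sit s), if even (enc_drop k (enc_sit s)) then 1 else 0)"
  using assms by (simp add: enc_sit_out_def enc_take_enc_sit nth_eq_even_enc_drop)

lemma lower_semicomputable_mult_gen:
  assumes lsc: "lower_semicomputable enc_sit_out (\<lambda>(s, x). D s x)"
    and nonneg: "\<And>s. 0 \<le> mult_gen D s"
  shows "lower_semicomputable enc_sit (mult_gen D)"
proof -
  from lsc obtain q where q: "recursive2 q"
    and q_inc: "\<And>a. incseq (\<lambda>n. rat_dec (q (enc_sit_out a) n))"
    and q_lim: "\<And>a. (\<lambda>n. rat_dec (q (enc_sit_out a) n)) \<longlonglongrightarrow> (case a of (s, x) \<Rightarrow> D s x)"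
    unfolding lower_semicomputable_def by blast
  define r where "r s x n = max 0 (rat_dec (q (enc_sit_out (s, x)) n))" for s x n
  define step where "step k c = prod_encode (enc_take k c, if even (enc_drop k c) then 1 else 0)" for k c
  define Q where "Q c n = prod_encode
    (2 * (\<Prod>k<enc_length c. rat_dec_num_pos (q (step k c) n)),
     (\<Prod>k<enc_length c. rat_dec_den (q (step k c) n)) - 1)" for c n
  have "recursive2 Q"
    unfolding Q_def step_def
    by (intro recursive2I recfn_prod_encode recfn_mult recfn_diff recfn_prod recfn_rat_dec_num_pos
        recfn_rat_dec_den recfn_recursive2[OF q] recfn_If recpred_even recfn_enc_take recfn_enc_drop
        recfn_enc_length recfn_proj recfn_proj_drop recfn_const; simp)
  moreover have Q_eq: "rat_dec (Q (enc_sit s) n) = (\<Prod>k<length s. r (take k s) (s ! k) n)" for s n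
  proof -
    have step: "step k (enc_sit s) = enc_sit_out (take k s, s ! k)" if "k \<in> {..<length s}" for k
      using that by (simp add: step_def enc_sit_out_take_nth)
    have "rat_dec (Q (enc_sit s) n) = real (\<Prod>k<length s. rat_dec_num_pos (q (step k (enc_sit s)) n))
      / real (\<Prod>k<length s. rat_dec_den (q (step k (enc_sit s)) n))"
      unfolding Q_def enc_length_enc_sit by (rule rat_dec_prod_encode) (simp add: rat_dec_den_def)
    also have "\<dots> = (\<Prod>k<length s. real (rat_dec_num_pos (q (step k (enc_sit s)) n))
      / real (rat_dec_den (q (step k (enc_sit s)) n)))"
      by (simp add: prod_dividef)
    also have "\<dots> = (\<Prod>k<length s. r (take k s) (s ! k) n)"
      by (rule prod.cong) (simp_all add: step r_def max_0_rat_dec)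
    finally show ?thesis .
  qed
  moreover have "incseq (\<lambda>n. rat_dec (Q (enc_sit s) n))" for s
    using q_inc unfolding Q_eq incseq_def r_def by (auto intro!: prod_mono max.mono)
  moreover have "(\<lambda>n. rat_dec (Q (enc_sit s) n)) \<longlonglongrightarrow> mult_gen D s" for s
  proof -
    have "(\<lambda>n. r s' x n) \<longlonglongrightarrow> max 0 (D s' x)" for s' x
      unfolding r_def using q_lim[of "(s', x)"] by (intro tendsto_max tendsto_const) simp_all
    then have "(\<lambda>n. rat_dec (Q (enc_sit s) n)) \<longlonglongrightarrow> mult_gen (\<lambda>s x. max 0 (D s x)) s"
      unfolding Q_eq mult_gen_def by (intro tendsto_prod)
    then show ?thesis
      using mult_gen_eq_max_0[OF nonneg] by simp
  qed
  ultimately show ?thesis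
    unfolding lower_semicomputable_def by blast
qed

lemma MartinLoef_random_imp_weak_MartinLoef_random:
  assumes "MartinLoef_random \<omega> I"
  shows "weak_MartinLoef_random \<omega> I"
  using assms lower_semicomputable_mult_gen
  unfolding MartinLoef_random_def weak_MartinLoef_random_def test_supermartingale_def by blast

(* The comparison acts on indices, so the running maximum stays recursive when the values
   are quotients of recursive functions. *)
definition running_argmax :: "(nat \<Rightarrow> nat \<Rightarrow> bool) \<Rightarrow> nat \<Rightarrow> nat" where
  "running_argmax le n = rec_nat 0 (\<lambda>m j. if le j (Suc m) then Suc m else j) n"

lemma running_argmax_max:
  fixes V :: "nat \<Rightarrow> 'a :: linorder"
  assumes le: "\<And>j k. le j k \<longleftrightarrow> V j \<le> V k"
  shows "running_argmax le n \<le> n \<and> (\<forall>m\<le>n. V m \<le> V (running_argmax le n))"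
proof (induct n)
  case (Suc n)
  define J where "J = running_argmax le n"
  have IH: "J \<le> n" "\<And>m. m \<le> n \<Longrightarrow> V m \<le> V J"
    using Suc unfolding J_def by auto
  have step: "running_argmax le (Suc n) = (if V J \<le> V (Suc n) then Suc n else J)"
    by (simp add: running_argmax_def J_def le)
  show ?case
  proof (cases "V J \<le> V (Suc n)")
    case True
    have "V m \<le> V (Suc n)" if "m \<le> Suc n" for m
      using that IH(2)[of m] True by (cases "m = Suc n") (auto intro: order.trans)
    with True step show ?thesis by simp
  next
    case False
    have "V m \<le> V J" if "m \<le> Suc n" for m
      using that IH(2)[of m] False by (cases "m = Suc n") auto
    with False step IH(1) show ?thesis by simp
  qed
qed (simp add: running_argmax_def)

lemma lower_semicomputable_from_below:
  fixes num den :: "nat \<Rightarrow> nat \<Rightarrow> nat" and code :: "'a \<Rightarrow> nat"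
  assumes num: "recursive2 num" and den: "recursive2 den" and den_pos: "\<And>c m. 0 < den c m"
    and below: "\<And>a m. real (num (code a) m) / real (den (code a) m) \<le> f a"
    and lim: "\<And>a. (\<lambda>m. real (num (code a) m) / real (den (code a) m)) \<longlonglongrightarrow> f a"
  shows "lower_semicomputable code f"
proof -
  define V where "V c m = real (num c m) / real (den c m)" for c m
  define J where "J c = running_argmax (\<lambda>j k. num c j * den c k \<le> num c k * den c j)" for c
  define Q where "Q c n = prod_encode (2 * num c (J c n), den c (J c n) - 1)" for c n
  have "num c j * den c k \<le> num c k * den c j \<longleftrightarrow> V c j \<le> V c k" for c j k
  proof -
    have "V c j \<le> V c k \<longleftrightarrow> real (num c j) * real (den c k) \<le> real (num c k) * real (den c j)"
      unfolding V_def using den_pos[of c j] den_pos[of c k] by (simp add: field_simps)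
    also have "\<dots> \<longleftrightarrow> num c j * den c k \<le> num c k * den c j"
      by (simp only: of_nat_mult[symmetric] of_nat_le_iff)
    finally show ?thesis ..
  qed
  then have J: "J c n \<le> n \<and> (\<forall>m\<le>n. V c m \<le> V c (J c n))" for c n
    unfolding J_def by (rule running_argmax_max)
  have "recfn 2 (\<lambda>xs. J (xs ! 0) (xs ! 1))"
    unfolding J_def running_argmax_def
    by (intro recfn_rec recfn_If recpred_le recfn_mult recfn_recursive2[OF num] recfn_recursive2[OF den]
        recfn_Suc recfn_proj recfn_proj_drop recfn_const; simp)
  from recfn_comp2[OF this] have recfn_J: "recfn n (\<lambda>xs. J (f xs) (g xs))"
    if "recfn n f" "recfn n g" for n f g
    using that by simp
  have "recursive2 Q"
    unfolding Q_def
    by (intro recursive2I recfn_prod_encode recfn_mult recfn_diff recfn_recursive2[OF num]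
        recfn_recursive2[OF den] recfn_J recfn_proj recfn_const; simp)
  moreover have Q_eq: "rat_dec (Q c n) = V c (J c n)" for c n
    unfolding Q_def V_def by (rule rat_dec_prod_encode[OF den_pos])
  moreover have "incseq (\<lambda>n. rat_dec (Q c n))" for c
    unfolding incseq_def Q_eq
  proof (intro allI impI)
    fix m n :: nat
    assume "m \<le> n"
    then have "J c m \<le> n"
      using J[of c m] by linarith
    then show "V c (J c m) \<le> V c (J c n)"
      using J[of c n] by blast
  qed
  moreover have "(\<lambda>n. rat_dec (Q (code a) n)) \<longlonglongrightarrow> f a" for a
    unfolding Q_eq
  proof (rule tendsto_sandwich[OF _ _ lim tendsto_const])
    show "\<forall>\<^sub>F n in sequentially. real (num (code a) n) / real (den (code a) n) \<le> V (code a) (J (code a) n)"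
      using J unfolding V_def by (intro always_eventually) blast
    show "\<forall>\<^sub>F n in sequentially. V (code a) (J (code a) n) \<le> f a"
      using below unfolding V_def by (intro always_eventually) blast
  qed
  ultimately show ?thesis
    unfolding lower_semicomputable_def by blast
qed

definition shifted_ratio :: "real \<Rightarrow> real \<Rightarrow> real \<Rightarrow> real" where
  "shifted_ratio e t u = (max 0 t + 1 - e) / (max 0 u + 1 + e)"

lemma shifted_ratio_le:
  assumes "0 \<le> y" "0 \<le> z" "\<bar>y - t\<bar> \<le> e" "\<bar>z - u\<bar> \<le> e" "e \<le> 1"
  shows "shifted_ratio e t u \<le> (y + 1) / (z + 1)"
  unfolding shifted_ratio_def
proof (rule frac_le)
  show "max 0 t + 1 - e \<le> y + 1" "z + 1 \<le> max 0 u + 1 + e"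
    using assms by (auto simp: abs_le_iff max_def)
qed (use assms in simp_all)

lemma tendsto_shifted_ratio:
  assumes "t \<longlonglongrightarrow> y" "u \<longlonglongrightarrow> z" "e \<longlonglongrightarrow> 0" "0 \<le> y" "0 \<le> z"
  shows "(\<lambda>m. shifted_ratio (e m) (t m) (u m)) \<longlonglongrightarrow> (y + 1) / (z + 1)"
proof -
  have "(\<lambda>m. shifted_ratio (e m) (t m) (u m)) \<longlonglongrightarrow> (max 0 y + 1 - 0) / (max 0 z + 1 + 0)"
    unfolding shifted_ratio_def using assms by (intro tendsto_intros) auto
  then show ?thesis
    using assms by simp
qed

lemma of_nat_shifted_ratio:
  fixes a b p r E :: nat
  assumes "0 < b" "0 < r" "0 < E"
  shows "real (r * (a * E + b * E - b)) / real (b * (p * E + r * E + r))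
    = shifted_ratio (1 / real E) (real a / real b) (real p / real r)"
proof -
  have "b \<le> a * E + b * E"
    using assms by (simp add: trans_le_add2)
  then have "real (r * (a * E + b * E - b)) / real (b * (p * E + r * E + r))
    = real r * (real a * real E + real b * real E - real b) / (real b * (real p * real E + real r * real E + real r))"
    by (simp add: of_nat_diff)
  also have "\<dots> = shifted_ratio (1 / real E) (real a / real b) (real p / real r)"
    unfolding shifted_ratio_def using assms by (simp add: divide_simps) (simp add: algebra_simps)
  finally show ?thesis .
qed

lemma lower_semicomputable_succ_ratio:
  assumes T: "computable_real enc_sit T" and T_nonneg: "\<And>s. 0 \<le> T s"
  shows "lower_semicomputable enc_sit_out (\<lambda>(s, x). (T (s @ [x]) + 1) / (T s + 1))"
proof -
  from T obtain q where q: "recursive2 q"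
    and q_approx: "\<And>s n. \<bar>T s - rat_dec (q (enc_sit s) n)\<bar> \<le> 1 / 2 ^ n"
    unfolding computable_real_def by blast
  define pre where "pre c = fst (prod_decode c)" for c
  define post where "post c = pre c + 2 ^ enc_length (pre c) * Suc (snd (prod_decode c))" for c
  have pre: "pre (enc_sit_out (s, x)) = enc_sit s" for s x
    by (simp add: pre_def enc_sit_out_def)
  have post: "post (enc_sit_out (s, x)) = enc_sit (s @ [x])" for s x
    by (simp add: post_def pre enc_length_enc_sit enc_sit_append) (simp add: enc_sit_out_def)
  define P1 where "P1 c m = rat_dec_num_pos (q (post c) m)" for c m
  define B1 where "B1 c m = rat_dec_den (q (post c) m)" for c m
  define P2 where "P2 c m = rat_dec_num_pos (q (pre c) m)" for c m
  define B2 where "B2 c m = rat_dec_den (q (pre c) m)" for c m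
  define num where "num c m = B2 c m * (P1 c m * 2 ^ m + B1 c m * 2 ^ m - B1 c m)" for c m
  define den where "den c m = B1 c m * (P2 c m * 2 ^ m + B2 c m * 2 ^ m + B2 c m)" for c m
  define t where "t s m = rat_dec (q (enc_sit s) m)" for s m
  have B_pos: "0 < B1 c m" "0 < B2 c m" for c m
    by (simp_all add: B1_def B2_def rat_dec_den_def)
  have recfn_pre: "recfn n f \<Longrightarrow> recfn n (\<lambda>xs. pre (f xs))" for n f
    unfolding pre_def by (rule recfn_prod_decode)
  have recfn_post: "recfn n f \<Longrightarrow> recfn n (\<lambda>xs. post (f xs))" for n f
    unfolding post_def
    by (intro recfn_add recfn_mult recfn_pow recfn_Suc recfn_enc_length recfn_pre recfn_prod_decode
        recfn_const)
  have "recursive2 num" "recursive2 den"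
    unfolding num_def den_def P1_def B1_def P2_def B2_def
    by (intro recursive2I recfn_add recfn_mult recfn_diff recfn_pow recfn_rat_dec_num_pos recfn_rat_dec_den
        recfn_recursive2[OF q] recfn_pre recfn_post recfn_proj recfn_const; simp)+
  moreover have "0 < den c m" for c m
    unfolding den_def using B_pos[of c m] by simp
  moreover have "real (num (enc_sit_out (s, x)) m) / real (den (enc_sit_out (s, x)) m)
      = shifted_ratio (1 / 2 ^ m) (t (s @ [x]) m) (t s m)" for s x m
  proof -
    have "real (num c m) / real (den c m)
      = shifted_ratio (1 / real (2 ^ m)) (real (P1 c m) / real (B1 c m)) (real (P2 c m) / real (B2 c m))"
      for c
      unfolding num_def den_def by (rule of_nat_shifted_ratio) (simp_all add: B_pos)
    then show ?thesis
      by (simp add: P1_def B1_def P2_def B2_def pre post t_def max_0_rat_dec[symmetric] shifted_ratio_def)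
  qed
  moreover have "shifted_ratio (1 / 2 ^ m) (t (s @ [x]) m) (t s m) \<le> (T (s @ [x]) + 1) / (T s + 1)" for s x m
    unfolding t_def by (rule shifted_ratio_le) (simp_all add: T_nonneg q_approx)
  moreover have "(\<lambda>m. shifted_ratio (1 / 2 ^ m) (t (s @ [x]) m) (t s m)) \<longlonglongrightarrow> (T (s @ [x]) + 1) / (T s + 1)"
    for s x
    unfolding t_def
    by (intro tendsto_shifted_ratio LIMSEQ_of_dyadic_approx T_nonneg q_approx) simp
  ultimately show ?thesis
    by (intro lower_semicomputable_from_below[of num den]) auto
qed

lemma mult_gen_ratio:
  assumes "\<And>s. F s \<noteq> 0"
  shows "mult_gen (\<lambda>s x. F (s @ [x]) / F s) s = F s / F []"
proof (induct s rule: rev_induct)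
  case (snoc x s)
  then show ?case using assms[of s] by (simp add: mult_gen_snoc)
qed (use assms in simp)

lemma test_supermartingale_half_succ:
  assumes I: "I \<in> interval_forecasts" and T: "test_supermartingale I T"
  shows "test_supermartingale I (\<lambda>s. (T s + 1) / 2)"
proof -
  have half: "p * ((T (s @ [True]) + 1) / 2 - (T s + 1) / 2) + (1 - p) * ((T (s @ [False]) + 1) / 2 - (T s + 1) / 2)
    = (p * (T (s @ [True]) - T s) + (1 - p) * (T (s @ [False]) - T s)) / 2" for p s
    by (simp add: field_simps)
  from T show ?thesis
    unfolding test_supermartingale_iff[OF I] half by auto
qed

lemma weak_MartinLoef_random_imp_C_random:
  assumes I: "I \<in> interval_forecasts" and wML: "weak_MartinLoef_random \<omega> I"
  shows "C_random \<omega> I"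
  unfolding C_random_def
proof (intro notI, elim exE conjE)
  fix T
  assume T: "test_supermartingale I T" and T_comp: "computable_real enc_sit T"
    and T_ls: "limsup (\<lambda>n. ereal (T (prefix \<omega> n))) = \<infinity>"
  have T_nonneg: "0 \<le> T s" for s
    using T unfolding test_supermartingale_def by blast
  define D where "D s x = (T (s @ [x]) + 1) / (T s + 1)" for s x
  have mult_gen_D: "mult_gen D s = (T s + 1) / 2" for s
    using mult_gen_ratio[of "\<lambda>s. T s + 1" s] T_nonneg T
    unfolding D_def test_supermartingale_def by (simp add: add_nonneg_eq_0_iff)
  have "test_supermartingale I (mult_gen D)"
    unfolding mult_gen_D by (rule test_supermartingale_half_succ[OF I T])
  moreover have "lower_semicomputable enc_sit_out (\<lambda>(s, x). D s x)"
    unfolding D_def by (rule lower_semicomputable_succ_ratio[OF T_comp T_nonneg])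
  moreover have "limsup (\<lambda>n. ereal (mult_gen D (prefix \<omega> n))) = \<infinity>"
  proof -
    have "\<exists>\<^sub>F n in sequentially. B < (T (prefix \<omega> n) + 1) / 2" for B
    proof -
      have "\<exists>\<^sub>F n in sequentially. 2 * B - 1 < T (prefix \<omega> n)"
        using T_ls unfolding limsup_ereal_eq_PInf_iff by blast
      then show ?thesis
        by (rule frequently_elim1) simp
    qed
    then show ?thesis
      unfolding mult_gen_D limsup_ereal_eq_PInf_iff by blast
  qed
  ultimately show False
    using wML unfolding weak_MartinLoef_random_def by blast
qed

lemma C_random_imp_S_random:
  assumes "C_random \<omega> I"
  shows "S_random \<omega> I"
  unfolding S_random_def
proof (intro notI, elim exE conjE)
  fix T \<tau>
  assume T: "test_supermartingale I T" "computable_real enc_sit T"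
    and \<tau>: "mono \<tau>" "\<not> bdd_above (range \<tau>)"
    and ls: "0 \<le> limsup (\<lambda>n. ereal (T (prefix \<omega> n) - \<tau> n))"
  have "\<exists>\<^sub>F n in sequentially. B < T (prefix \<omega> n)" for B
  proof -
    have "\<exists>\<^sub>F n in sequentially. -1 < T (prefix \<omega> n) - \<tau> n"
      using less_le_trans[OF _ ls, of "ereal (-1)"] by (intro frequently_less_of_less_limsup) simp
    moreover have "\<not> (\<forall>n. \<tau> n \<le> B + 1)"
      using \<tau>(2) bdd_aboveI2[of UNIV \<tau> "B + 1"] by auto
    then obtain m where m: "B + 1 < \<tau> m"
      by (auto simp: not_le)
    have "\<forall>\<^sub>F n in sequentially. B + 1 < \<tau> n"
      unfolding eventually_sequentially
    proof (intro exI allI impI)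
      fix n
      assume "m \<le> n"
      then show "B + 1 < \<tau> n"
        using m \<tau>(1) by (simp add: mono_def less_le_trans)
    qed
    ultimately show ?thesis
      by (rule frequently_eventually_frequently[THEN frequently_elim1]) linarith
  qed
  then show False
    using assms T unfolding C_random_def limsup_ereal_eq_PInf_iff by blast
qed

section \<open>Frequencies along selections\<close>

definition sel_rounds :: "(bool list \<Rightarrow> bool) \<Rightarrow> bool list \<Rightarrow> nat" where
  "sel_rounds S s = (\<Sum>k<length s. of_bool (S (take k s)))"

definition sel_hits :: "(bool list \<Rightarrow> bool) \<Rightarrow> bool \<Rightarrow> bool list \<Rightarrow> nat" where
  "sel_hits S v s = (\<Sum>k<length s. of_bool (S (take k s) \<and> s ! k = v))"

definition sel_bet :: "(bool list \<Rightarrow> bool) \<Rightarrow> real \<Rightarrow> real \<Rightarrow> bool list \<Rightarrow> real" where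
  "sel_bet S u d s = u ^ sel_hits S True s * d ^ sel_hits S False s"

lemma sel_rounds_eq_sel_hits: "sel_rounds S s = sel_hits S True s + sel_hits S False s"
  unfolding sel_rounds_def sel_hits_def sum.distrib[symmetric] by (rule sum.cong) auto

lemma sel_hits_snoc: "sel_hits S v (s @ [x]) = sel_hits S v s + of_bool (S s \<and> x = v)"
proof -
  have "sel_hits S v (s @ [x])
    = (\<Sum>k<length s. of_bool (S (take k (s @ [x])) \<and> (s @ [x]) ! k = v)) + of_bool (S s \<and> x = v)"
    unfolding sel_hits_def by simp
  also have "(\<Sum>k<length s. of_bool (S (take k (s @ [x])) \<and> (s @ [x]) ! k = v)) = sel_hits S v s"
    unfolding sel_hits_def by (rule sum.cong) (simp_all add: nth_append)
  finally show ?thesis .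
qed

lemma length_prefix [simp]: "length (prefix \<omega> n) = n"
  unfolding prefix_def by simp

lemma take_prefix: "k \<le> n \<Longrightarrow> take k (prefix \<omega> n) = prefix \<omega> k"
  unfolding prefix_def by (simp add: take_map)

lemma nth_prefix: "k < n \<Longrightarrow> prefix \<omega> n ! k = \<omega> k"
  unfolding prefix_def by simp

lemma sel_rounds_prefix: "sel_rounds S (prefix \<omega> n) = (\<Sum>k<n. of_bool (S (prefix \<omega> k)))"
  unfolding sel_rounds_def by (rule sum.cong) (simp_all add: take_prefix)

lemma mono_sel_rounds_prefix: "mono (\<lambda>n. sel_rounds S (prefix \<omega> n))"
  unfolding mono_def sel_rounds_prefix by (intro allI impI sum_mono2) auto

lemma sel_count_eq: "sel_count S \<omega> n = real (sel_rounds S (prefix \<omega> n))"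
  unfolding sel_count_def sel_rounds_prefix by simp

lemma rel_freq_eq:
  "rel_freq S \<omega> n = real (sel_hits S True (prefix \<omega> n)) / real (sel_rounds S (prefix \<omega> n))"
proof -
  have "real (sel_hits S True (prefix \<omega> n)) = (\<Sum>k<n. of_bool (S (prefix \<omega> k)) * of_bool (\<omega> k))"
    unfolding sel_hits_def of_nat_sum by (rule sum.cong) (simp_all add: take_prefix nth_prefix)
  then show ?thesis
    unfolding rel_freq_def sel_count_eq by (rule arg_cong[where f = "\<lambda>x. x / _", symmetric])
qed

lemma test_supermartingale_sel_bet:
  assumes I: "I \<in> interval_forecasts" and "0 \<le> u" "0 \<le> d"
    and fair: "\<forall>p\<in>I. p * (u - 1) + (1 - p) * (d - 1) \<le> 0"
  shows "test_supermartingale I (sel_bet S u d)"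
  unfolding test_supermartingale_iff[OF I]
proof (intro conjI allI ballI)
  fix s p
  assume "p \<in> I"
  have "p * (sel_bet S u d (s @ [True]) - sel_bet S u d s)
      + (1 - p) * (sel_bet S u d (s @ [False]) - sel_bet S u d s)
    = of_bool (S s) * sel_bet S u d s * (p * (u - 1) + (1 - p) * (d - 1))"
    by (simp add: sel_bet_def sel_hits_snoc algebra_simps)
  also have "\<dots> \<le> 0"
    using fair \<open>p \<in> I\<close> assms(2,3) by (simp add: sel_bet_def mult_nonneg_nonpos)
  finally show "p * (sel_bet S u d (s @ [True]) - sel_bet S u d s)
      + (1 - p) * (sel_bet S u d (s @ [False]) - sel_bet S u d s) \<le> 0" .
qed (use assms(2,3) in \<open>simp_all add: sel_bet_def sel_hits_def\<close>)

lemma recursive1_sel_hits: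
  assumes "recursive_sel S"
  shows "\<exists>h. recursive1 h \<and> (\<forall>s. h (enc_sit s) = sel_hits S v s)"
proof -
  from assms obtain g where g: "recursive1 g" and gS: "\<And>s. g (enc_sit s) = of_bool (S s)"
    unfolding recursive_sel_def by auto
  define h :: "nat \<Rightarrow> nat"
    where "h c = (\<Sum>k<enc_length c. of_bool (g (enc_take k c) = 1 \<and> even (enc_drop k c) = v))" for c
  have even: "recpred (Suc 1) (\<lambda>ys. even (enc_drop (ys ! 0) (drop 1 ys ! 0)))"
    by (intro recpred_even recfn_enc_drop recfn_proj recfn_proj_drop; simp)
  have "recpred (Suc 1) (\<lambda>ys. even (enc_drop (ys ! 0) (drop 1 ys ! 0)) = v)"
  proof (cases v)
    case False
    with recpred_not[OF even] show ?thesis by simp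
  qed (use even in simp)
  then have "recfn 1 (\<lambda>xs. h (xs ! 0))"
    unfolding h_def of_bool_def
    by (intro recfn_sum recfn_If recpred_conj recpred_eq recfn_recursive1[OF g] recfn_enc_take
        recfn_enc_length recfn_proj recfn_proj_drop recfn_const; simp)
  moreover have "h (enc_sit s) = sel_hits S v s" for s
    unfolding h_def sel_hits_def enc_length_enc_sit
    by (rule sum.cong) (simp_all add: enc_take_enc_sit gS nth_eq_even_enc_drop)
  ultimately show ?thesis
    using recursive1I by blast
qed

lemma computable_sel_bet:
  assumes S: "recursive_sel S" and q: "0 < q"
  shows "computable_real enc_sit (sel_bet S (real p1 / real q) (real p0 / real q))"
proof -
  obtain h1 h0 where h1: "recursive1 h1" and h1S: "\<And>s. h1 (enc_sit s) = sel_hits S True s"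
    and h0: "recursive1 h0" and h0S: "\<And>s. h0 (enc_sit s) = sel_hits S False s"
    using recursive1_sel_hits[OF S, of True] recursive1_sel_hits[OF S, of False] by blast
  define code where "code c n = prod_encode (2 * (p1 ^ h1 c * p0 ^ h0 c), q ^ (h1 c + h0 c) - 1)" for c n :: nat
  have "recursive2 code"
    unfolding code_def
    by (intro recursive2I recfn_prod_encode recfn_mult recfn_diff recfn_pow recfn_add
        recfn_recursive1[OF h1] recfn_recursive1[OF h0] recfn_proj recfn_const; simp)
  moreover have "rat_dec (code (enc_sit s) n) = sel_bet S (real p1 / real q) (real p0 / real q) s" for s n
    unfolding code_def h1S h0S sel_bet_def using q
    by (subst rat_dec_prod_encode) (simp_all add: power_divide power_add)
  ultimately show ?thesis
    unfolding computable_real_def by (intro exI[of _ code]) simp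
qed

lemma biased_bet_growth:
  fixes b e :: real and G B :: nat
  assumes b: "0 \<le> b" "b \<le> 1" and e: "0 < e" "e \<le> 1 / 2"
    and freq: "(b + 3 * e) * real (G + B) \<le> real G"
  shows "(1 + e\<^sup>2) ^ (G + B) \<le> (1 + e * (1 - b)) ^ G * (1 - e * b) ^ B"
proof -
  define x1 where "x1 = e * (1 - b)"
  define x0 where "x0 = e * b"
  have x1: "0 \<le> x1" "x1 \<le> e" and x0: "0 \<le> x0" "x0 \<le> e"
    unfolding x1_def x0_def using b e by (auto simp: mult_left_le)
  have "\<bar>ln (1 + x1) - x1\<bar> \<le> 2 * x1\<^sup>2" "x1\<^sup>2 \<le> e\<^sup>2"
    using x1 e by (auto intro!: abs_ln_one_plus_x_minus_x_bound power_mono)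
  then have ln1: "x1 - 2 * e\<^sup>2 \<le> ln (1 + x1)"
    by linarith
  have "\<bar>ln (1 + (- x0)) - (- x0)\<bar> \<le> 2 * (- x0)\<^sup>2"
    using x0 e by (intro abs_ln_one_plus_x_minus_x_bound) simp
  moreover have "x0\<^sup>2 \<le> e\<^sup>2"
    using x0 by (intro power_mono) simp_all
  ultimately have ln0: "- x0 - 2 * e\<^sup>2 \<le> ln (1 - x0)"
    by simp
  have pos: "0 < 1 + x1" "0 < 1 - x0"
    using x1 x0 e by auto
  have "ln ((1 + e\<^sup>2) ^ (G + B)) = real (G + B) * ln (1 + e\<^sup>2)"
    by (rule ln_realpow)
  also have "\<dots> \<le> real (G + B) * e\<^sup>2"
    using ln_le_minus_one[of "1 + e\<^sup>2"] by (intro mult_left_mono) (simp_all add: add_pos_nonneg)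
  also have "\<dots> \<le> real G * (x1 - 2 * e\<^sup>2) + real B * (- x0 - 2 * e\<^sup>2)"
  proof -
    have "e * (3 * e * real (G + B)) \<le> e * (real G - b * real (G + B))"
      using freq e by (intro mult_left_mono) (simp_all add: algebra_simps)
    then show ?thesis
      unfolding x1_def x0_def by (simp add: power2_eq_square algebra_simps)
  qed
  also have "\<dots> \<le> real G * ln (1 + x1) + real B * ln (1 - x0)"
    using ln1 ln0 by (intro add_mono mult_left_mono) simp_all
  also have "\<dots> = ln ((1 + x1) ^ G * (1 - x0) ^ B)"
    using pos by (simp add: ln_mult ln_realpow)
  finally show ?thesis
    using pos unfolding x1_def x0_def by (simp add: add_pos_nonneg)
qed

lemma fair_bet_factors:
  fixes c \<gamma> :: real
  assumes c: "0 \<le> c" "c \<le> 1" and c\<gamma>: "c < \<gamma>"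
  obtains q p1 p0 :: nat where "0 < q"
    "\<forall>p\<le>c. p * (real p1 / real q - 1) + (1 - p) * (real p0 / real q - 1) \<le> 0"
    "\<forall>G B. \<gamma> * real (G + B) \<le> real G \<longrightarrow>
      (1 + 1 / real q) ^ (G + B) \<le> (real p1 / real q) ^ G * (real p0 / real q) ^ B"
proof -
  obtain n :: nat where n: "4 / (\<gamma> - c) < real n"
    using reals_Archimedean2 by blast
  define L where "L = max 2 n"
  then have "4 / (\<gamma> - c) < real L"
    using n by linarith
  then have L: "2 \<le> L" "4 / real L \<le> \<gamma> - c"
    using c\<gamma> unfolding L_def by (simp_all add: field_simps)
  define j where "j = nat \<lceil>c * real L\<rceil>"
  have j: "c * real L \<le> real j" "real j < c * real L + 1" "j \<le> L"
    using c L unfolding j_def by (auto simp: ceiling_le_iff mult_left_le_one_le) linarith+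
  \<comment> \<open>bet the factors 1 + e (1 - b) and 1 - e b, with e = 1 / L and b = j / L the grid point
    just above c; over the denominator L^2 they are natural numbers\<close>
  define e b where "e = 1 / real L" and "b = real j / real L"
  have Lpos: "0 < real L"
    using L by simp
  have e: "0 < e" "e \<le> 1 / 2" and b: "c \<le> b" "b < c + e" "b \<le> 1"
    using L j Lpos unfolding e_def b_def by (auto simp: field_simps)
  have "j \<le> L * L"
    using j(3) le_square[of L] by linarith
  then have u: "real (L * L + L - j) / real (L * L) = 1 + e * (1 - b)"
    and d: "real (L * L - j) / real (L * L) = 1 - e * b"
    using j(3) Lpos unfolding e_def b_def by (simp_all add: of_nat_diff field_simps)
  have q: "1 / real (L * L) = e\<^sup>2"
    unfolding e_def by (simp add: power2_eq_square)
  show ?thesis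
  proof (rule that[of "L * L" "L * L + L - j" "L * L - j", unfolded u d q])
    show "0 < L * L"
      using L by simp
    show "\<forall>p\<le>c. p * (1 + e * (1 - b) - 1) + (1 - p) * (1 - e * b - 1) \<le> 0"
      using b(1) e(1) by (simp add: algebra_simps mult_left_mono)
    show "\<forall>G B. \<gamma> * real (G + B) \<le> real G \<longrightarrow>
      (1 + e\<^sup>2) ^ (G + B) \<le> (1 + e * (1 - b)) ^ G * (1 - e * b) ^ B"
    proof (intro allI impI biased_bet_growth)
      fix G B :: nat
      assume that: "\<gamma> * real (G + B) \<le> real G"
      have "b + 3 * e \<le> \<gamma>"
        using b L unfolding e_def by simp
      then show "(b + 3 * e) * real (G + B) \<le> real G"
        using that by (meson mult_right_mono of_nat_0_le_iff order.trans)
    qed (use b(3) e j c in \<open>auto simp: b_def\<close>)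
  qed
qed

lemma sel_bet_frequently_grows_of_bias:
  assumes "0 \<le> c" "c \<le> 1" "c < \<gamma>"
    and bias: "\<exists>\<^sub>F n in sequentially. \<gamma> * real (sel_rounds S (prefix \<omega> n)) \<le> real (sel_hits S v (prefix \<omega> n))"
  obtains q p1 p0 :: nat where "0 < q"
    "\<forall>p\<le>c. p * (real p1 / real q - 1) + (1 - p) * (real p0 / real q - 1) \<le> 0"
    "\<exists>\<^sub>F n in sequentially. (1 + 1 / real q) ^ sel_rounds S (prefix \<omega> n)
      \<le> (real p1 / real q) ^ sel_hits S v (prefix \<omega> n) * (real p0 / real q) ^ sel_hits S (\<not> v) (prefix \<omega> n)"
proof -
  obtain q p1 p0 :: nat where q: "0 < q"
    and fair: "\<forall>p\<le>c. p * (real p1 / real q - 1) + (1 - p) * (real p0 / real q - 1) \<le> 0"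
    and grow: "\<forall>G B. \<gamma> * real (G + B) \<le> real G \<longrightarrow>
      (1 + 1 / real q) ^ (G + B) \<le> (real p1 / real q) ^ G * (real p0 / real q) ^ B"
    using assms(1-3) by (rule fair_bet_factors)
  have rounds: "sel_rounds S s = sel_hits S v s + sel_hits S (\<not> v) s" for s
    using sel_rounds_eq_sel_hits[of S s] by (cases v) simp_all
  have "\<exists>\<^sub>F n in sequentially. (1 + 1 / real q) ^ sel_rounds S (prefix \<omega> n)
      \<le> (real p1 / real q) ^ sel_hits S v (prefix \<omega> n) * (real p0 / real q) ^ sel_hits S (\<not> v) (prefix \<omega> n)"
    using bias by (rule frequently_elim1) (simp add: rounds grow)
  with q fair show ?thesis by (rule that)
qed

lemma eventually_sel_rounds_pos:
  assumes "filterlim (sel_count S \<omega>) at_top sequentially"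
  shows "\<forall>\<^sub>F n in sequentially. 0 < real (sel_rounds S (prefix \<omega> n))"
proof -
  have "\<forall>\<^sub>F n in sequentially. 1 \<le> sel_count S \<omega> n"
    using assms unfolding filterlim_at_top by blast
  then show ?thesis
    by (rule eventually_mono) (simp add: sel_count_eq)
qed

lemma frequently_many_ones:
  assumes "filterlim (sel_count S \<omega>) at_top sequentially"
    and "\<exists>\<^sub>F n in sequentially. \<beta> \<le> rel_freq S \<omega> n"
  shows "\<exists>\<^sub>F n in sequentially. \<beta> * real (sel_rounds S (prefix \<omega> n)) \<le> real (sel_hits S True (prefix \<omega> n))"
  using frequently_eventually_frequently[OF assms(2) eventually_sel_rounds_pos[OF assms(1)]]
proof (rule frequently_elim1)
  fix n
  assume n: "\<beta> \<le> rel_freq S \<omega> n \<and> 0 < real (sel_rounds S (prefix \<omega> n))"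
  then have "\<beta> \<le> real (sel_hits S True (prefix \<omega> n)) / real (sel_rounds S (prefix \<omega> n))"
    unfolding rel_freq_eq by (rule conjunct1)
  with n show "\<beta> * real (sel_rounds S (prefix \<omega> n)) \<le> real (sel_hits S True (prefix \<omega> n))"
    by (simp add: pos_le_divide_eq)
qed

lemma frequently_many_zeros:
  assumes "filterlim (sel_count S \<omega>) at_top sequentially"
    and "\<exists>\<^sub>F n in sequentially. rel_freq S \<omega> n \<le> \<alpha>"
  shows "\<exists>\<^sub>F n in sequentially. (1 - \<alpha>) * real (sel_rounds S (prefix \<omega> n)) \<le> real (sel_hits S False (prefix \<omega> n))"
  using frequently_eventually_frequently[OF assms(2) eventually_sel_rounds_pos[OF assms(1)]]
proof (rule frequently_elim1)
  fix n
  assume n: "rel_freq S \<omega> n \<le> \<alpha> \<and> 0 < real (sel_rounds S (prefix \<omega> n))"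
  then have "real (sel_hits S True (prefix \<omega> n)) / real (sel_rounds S (prefix \<omega> n)) \<le> \<alpha>"
    unfolding rel_freq_eq by (rule conjunct1)
  with n have "real (sel_hits S True (prefix \<omega> n)) \<le> \<alpha> * real (sel_rounds S (prefix \<omega> n))"
    by (simp add: pos_divide_le_eq)
  then show "(1 - \<alpha>) * real (sel_rounds S (prefix \<omega> n)) \<le> real (sel_hits S False (prefix \<omega> n))"
    unfolding sel_rounds_eq_sel_hits by (simp add: algebra_simps)
qed

lemma sel_bet_frequently_grows:
  assumes I: "I \<in> interval_forecasts" and sel: "filterlim (sel_count S \<omega>) at_top sequentially"
    and dev: "\<not> (ereal (Inf I) \<le> liminf (\<lambda>n. ereal (rel_freq S \<omega> n))
      \<and> limsup (\<lambda>n. ereal (rel_freq S \<omega> n)) \<le> ereal (Sup I))"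
  obtains q p1 p0 :: nat where "0 < q"
    "\<forall>p\<in>I. p * (real p1 / real q - 1) + (1 - p) * (real p0 / real q - 1) \<le> 0"
    "\<exists>\<^sub>F n in sequentially. (1 + 1 / real q) ^ sel_rounds S (prefix \<omega> n)
      \<le> sel_bet S (real p1 / real q) (real p0 / real q) (prefix \<omega> n)"
proof -
  obtain a b where ab: "0 \<le> a" "a \<le> b" "b \<le> 1" "I = {a..b}"
    using I unfolding interval_forecasts_def by blast
  from dev consider "\<not> limsup (\<lambda>n. ereal (rel_freq S \<omega> n)) \<le> ereal b"
    | "\<not> ereal a \<le> liminf (\<lambda>n. ereal (rel_freq S \<omega> n))"
    using ab by simp blast
  then show ?thesis
  proof cases
    case 1
    then obtain \<beta> where \<beta>: "b < \<beta>" "\<exists>\<^sub>F n in sequentially. \<beta> \<le> rel_freq S \<omega> n"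
      by (rule frequently_ge_of_limsup_gt)
    have "0 \<le> b" "b \<le> 1" "b < \<beta>"
      using ab \<beta>(1) by simp_all
    then obtain q p1 p0 :: nat where q: "0 < q"
      and fair: "\<forall>p\<le>b. p * (real p1 / real q - 1) + (1 - p) * (real p0 / real q - 1) \<le> 0"
      and grows: "\<exists>\<^sub>F n in sequentially. (1 + 1 / real q) ^ sel_rounds S (prefix \<omega> n)
        \<le> (real p1 / real q) ^ sel_hits S True (prefix \<omega> n) * (real p0 / real q) ^ sel_hits S (\<not> True) (prefix \<omega> n)"
      using frequently_many_ones[OF sel \<beta>(2)] by (rule sel_bet_frequently_grows_of_bias)
    show ?thesis
      by (rule that[OF q]) (use fair grows ab in \<open>simp_all add: sel_bet_def\<close>)
  next
    case 2
    \<comment> \<open>too few ones means too many zeros: bet with the roles of the outcomes exchanged\<close>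
    then obtain \<alpha> where \<alpha>: "\<alpha> < a" "\<exists>\<^sub>F n in sequentially. rel_freq S \<omega> n \<le> \<alpha>"
      by (rule frequently_le_of_liminf_lt)
    have "0 \<le> 1 - a" "1 - a \<le> 1" "1 - a < 1 - \<alpha>"
      using ab \<alpha>(1) by simp_all
    then obtain q p0 p1 :: nat where q: "0 < q"
      and fair: "\<forall>p\<le>1 - a. p * (real p0 / real q - 1) + (1 - p) * (real p1 / real q - 1) \<le> 0"
      and grows: "\<exists>\<^sub>F n in sequentially. (1 + 1 / real q) ^ sel_rounds S (prefix \<omega> n)
        \<le> (real p0 / real q) ^ sel_hits S False (prefix \<omega> n) * (real p1 / real q) ^ sel_hits S (\<not> False) (prefix \<omega> n)"
      using frequently_many_zeros[OF sel \<alpha>(2)] by (rule sel_bet_frequently_grows_of_bias)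
    show ?thesis
    proof (rule that[OF q])
      show "\<forall>p\<in>I. p * (real p1 / real q - 1) + (1 - p) * (real p0 / real q - 1) \<le> 0"
      proof
        fix p
        assume "p \<in> I"
        then have "1 - p \<le> 1 - a"
          using ab by simp
        from fair[rule_format, OF this]
        show "p * (real p1 / real q - 1) + (1 - p) * (real p0 / real q - 1) \<le> 0"
          by (simp add: algebra_simps)
      qed
      show "\<exists>\<^sub>F n in sequentially. (1 + 1 / real q) ^ sel_rounds S (prefix \<omega> n)
        \<le> sel_bet S (real p1 / real q) (real p0 / real q) (prefix \<omega> n)"
        using grows by (simp add: sel_bet_def mult.commute)
    qed
  qed
qed

lemma filterlim_pow_sel_rounds_at_top:
  assumes sel: "filterlim (sel_count S \<omega>) at_top sequentially" and q: "0 < q"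
  shows "filterlim (\<lambda>n. (1 + 1 / real q) ^ sel_rounds S (prefix \<omega> n)) at_top sequentially"
  unfolding filterlim_at_top
proof
  fix Z :: real
  have "\<forall>\<^sub>F n in sequentially. Z * real q \<le> sel_count S \<omega> n"
    using sel unfolding filterlim_at_top by blast
  then show "\<forall>\<^sub>F n in sequentially. Z \<le> (1 + 1 / real q) ^ sel_rounds S (prefix \<omega> n)"
  proof (rule eventually_mono)
    fix n
    assume "Z * real q \<le> sel_count S \<omega> n"
    then have "Z \<le> real (sel_rounds S (prefix \<omega> n)) * (1 / real q)"
      using q by (simp add: sel_count_eq field_simps)
    also have "\<dots> \<le> 1 + real (sel_rounds S (prefix \<omega> n)) * (1 / real q)"
      by simp
    also have "\<dots> \<le> (1 + 1 / real q) ^ sel_rounds S (prefix \<omega> n)"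
      by (rule Bernoulli_inequality) (rule order.trans[of _ 0]; simp)
    finally show "Z \<le> (1 + 1 / real q) ^ sel_rounds S (prefix \<omega> n)" .
  qed
qed

lemma CH_random_imp_wCH_random: "CH_random \<omega> I \<Longrightarrow> wCH_random \<omega> I"
  unfolding CH_random_def wCH_random_def by blast

lemma C_random_imp_CH_random:
  assumes I: "I \<in> interval_forecasts" and C: "C_random \<omega> I"
  shows "CH_random \<omega> I"
  unfolding CH_random_def freq_ok_def
proof (intro allI impI, rule ccontr)
  fix S
  assume S: "recursive_sel S" and sel: "filterlim (sel_count S \<omega>) at_top sequentially"
    and dev: "\<not> (ereal (Inf I) \<le> liminf (\<lambda>n. ereal (rel_freq S \<omega> n))
      \<and> limsup (\<lambda>n. ereal (rel_freq S \<omega> n)) \<le> ereal (Sup I))"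
  obtain q p1 p0 :: nat where q: "0 < q"
    and fair: "\<forall>p\<in>I. p * (real p1 / real q - 1) + (1 - p) * (real p0 / real q - 1) \<le> 0"
    and grows: "\<exists>\<^sub>F n in sequentially. (1 + 1 / real q) ^ sel_rounds S (prefix \<omega> n)
      \<le> sel_bet S (real p1 / real q) (real p0 / real q) (prefix \<omega> n)"
    by (rule sel_bet_frequently_grows[OF I sel dev])
  have "test_supermartingale I (sel_bet S (real p1 / real q) (real p0 / real q))"
    using fair by (intro test_supermartingale_sel_bet[OF I]) simp_all
  moreover have "computable_real enc_sit (sel_bet S (real p1 / real q) (real p0 / real q))"
    by (rule computable_sel_bet[OF S q])
  moreover have "limsup (\<lambda>n. ereal (sel_bet S (real p1 / real q) (real p0 / real q) (prefix \<omega> n))) = \<infinity>"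
    by (rule limsup_eq_PInf_of_frequently_ge[OF grows filterlim_pow_sel_rounds_at_top[OF sel q]])
  ultimately show False
    using C unfolding C_random_def by blast
qed

lemma sel_rounds_replicate:
  "sel_rounds S (replicate n False) = (\<Sum>k<n. of_bool (S (replicate k False)))"
  unfolding sel_rounds_def by (rule sum.cong) (simp_all add: min_def)

lemma temporal_sel_rounds_prefix:
  assumes "temporal S"
  shows "sel_rounds S (prefix \<omega> n) = sel_rounds S (replicate n False)"
  unfolding sel_rounds_prefix sel_rounds_replicate
  using assms unfolding temporal_def by (intro sum.cong refl) (metis length_prefix length_replicate)

lemma computable_pow_sel_rounds:
  assumes S: "recursive_sel S" and q: "0 < q"
  shows "computable_real id (\<lambda>n. (1 + 1 / real q) ^ sel_rounds S (replicate n False) - 1)"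
proof -
  from S obtain g where g: "recursive1 g" and gS: "\<And>s. g (enc_sit s) = of_bool (S s)"
    unfolding recursive_sel_def by auto
  define R where "R n = (\<Sum>k<n. g (2 ^ k - 1))" for n
  have "g (2 ^ k - 1) = of_bool (S (replicate k False))" for k
    using gS[of "replicate k False"] by (simp add: enc_sit_replicate_False)
  then have R: "R n = sel_rounds S (replicate n False)" for n
    unfolding R_def sel_rounds_replicate by simp
  define code where "code n m = prod_encode (2 * ((q + 1) ^ R n - q ^ R n), q ^ R n - 1)" for n m :: nat
  have "recursive2 code"
    unfolding code_def R_def
    by (intro recursive2I recfn_prod_encode recfn_mult recfn_diff recfn_pow recfn_add recfn_sum
        recfn_recursive1[OF g] recfn_proj recfn_const; simp)
  moreover have "rat_dec (code n m) = (1 + 1 / real q) ^ R n - 1" for n m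
  proof -
    have "q ^ R n \<le> (q + 1) ^ R n"
      by (rule power_mono) simp_all
    then have "rat_dec (code n m) = ((real q + 1) ^ R n - real q ^ R n) / real q ^ R n"
      unfolding code_def using q by (subst rat_dec_prod_encode) (simp_all add: of_nat_diff add.commute)
    also have "\<dots> = (1 + 1 / real q) ^ R n - 1"
      using q by (simp add: diff_divide_distrib power_divide[symmetric] add_divide_distrib)
    finally show ?thesis .
  qed
  ultimately show ?thesis
    unfolding computable_real_def R by (intro exI[of _ code]) simp
qed

lemma S_random_imp_wCH_random:
  assumes I: "I \<in> interval_forecasts" and Sr: "S_random \<omega> I"
  shows "wCH_random \<omega> I"
  unfolding wCH_random_def freq_ok_def
proof (intro allI impI, rule ccontr, elim conjE)
  fix S
  assume S: "recursive_sel S" and tmp: "temporal S" and sel: "filterlim (sel_count S \<omega>) at_top sequentially"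
    and dev: "\<not> (ereal (Inf I) \<le> liminf (\<lambda>n. ereal (rel_freq S \<omega> n))
      \<and> limsup (\<lambda>n. ereal (rel_freq S \<omega> n)) \<le> ereal (Sup I))"
  obtain q p1 p0 :: nat where q: "0 < q"
    and fair: "\<forall>p\<in>I. p * (real p1 / real q - 1) + (1 - p) * (real p0 / real q - 1) \<le> 0"
    and grows: "\<exists>\<^sub>F n in sequentially. (1 + 1 / real q) ^ sel_rounds S (prefix \<omega> n)
      \<le> sel_bet S (real p1 / real q) (real p0 / real q) (prefix \<omega> n)"
    by (rule sel_bet_frequently_grows[OF I sel dev])
  define T where "T = sel_bet S (real p1 / real q) (real p0 / real q)"
  define \<tau> where "\<tau> n = (1 + 1 / real q) ^ sel_rounds S (prefix \<omega> n) - 1" for n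
  have "test_supermartingale I T"
    unfolding T_def using fair by (intro test_supermartingale_sel_bet[OF I]) simp_all
  moreover have "computable_real enc_sit T"
    unfolding T_def by (rule computable_sel_bet[OF S q])
  moreover have "computable_real id \<tau>"
    using computable_pow_sel_rounds[OF S q] unfolding \<tau>_def temporal_sel_rounds_prefix[OF tmp] .
  moreover have "\<forall>n. 0 \<le> \<tau> n"
    unfolding \<tau>_def by simp
  moreover have "mono \<tau>"
    using mono_sel_rounds_prefix unfolding mono_def \<tau>_def
    by (intro allI impI diff_right_mono power_increasing) simp_all
  moreover have "\<not> bdd_above (range \<tau>)"
  proof (rule not_bdd_above_of_filterlim_at_top)
    show "filterlim \<tau> at_top sequentially"
      using filterlim_tendsto_add_at_top[OF tendsto_const[of "-1"] filterlim_pow_sel_rounds_at_top[OF sel q]]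
      unfolding \<tau>_def[abs_def] by simp
  qed
  moreover have "0 \<le> limsup (\<lambda>n. ereal (T (prefix \<omega> n) - \<tau> n))"
  proof -
    have "\<exists>\<^sub>F n in sequentially. 1 \<le> T (prefix \<omega> n) - \<tau> n"
      using grows by (rule frequently_elim1) (simp add: T_def \<tau>_def)
    then have "ereal 1 \<le> limsup (\<lambda>n. ereal (T (prefix \<omega> n) - \<tau> n))"
      by (rule le_limsup_of_frequently_le)
    then show ?thesis
      by (rule order.trans[rotated]) simp
  qed
  ultimately have "\<exists>T \<tau>. test_supermartingale I T \<and> computable_real enc_sit T \<and> computable_real id \<tau>
    \<and> (\<forall>n. 0 \<le> \<tau> n) \<and> mono \<tau> \<and> \<not> bdd_above (range \<tau>)
    \<and> limsup (\<lambda>n. ereal (T (prefix \<omega> n) - \<tau> n)) \<ge> 0"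
    by (intro exI[of _ T] exI[of _ \<tau>] conjI)
  with Sr show False
    unfolding S_random_def by blast
qed

lemma I_of_antimono:
  assumes "\<And>I. I \<in> interval_forecasts \<Longrightarrow> R' \<omega> I \<Longrightarrow> R \<omega> I"
  shows "I_of R \<omega> \<subseteq> I_of R' \<omega>"
  unfolding I_of_def using assms by (intro Inter_anti_mono) blast

theorem corollary1:
  fixes \<omega> :: "nat \<Rightarrow> bool"
  shows "I_of wCH_random \<omega> \<subseteq> I_of CH_random \<omega> \<and> I_of CH_random \<omega> \<subseteq> I_of C_random \<omega>
    \<and> I_of wCH_random \<omega> \<subseteq> I_of S_random \<omega> \<and> I_of S_random \<omega> \<subseteq> I_of C_random \<omega>
    \<and> I_of C_random \<omega> \<subseteq> I_of weak_MartinLoef_random \<omega> \<and> I_of weak_MartinLoef_random \<omega> \<subseteq> I_of MartinLoef_random \<omega>"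
  using CH_random_imp_wCH_random C_random_imp_CH_random S_random_imp_wCH_random C_random_imp_S_random
    weak_MartinLoef_random_imp_C_random MartinLoef_random_imp_weak_MartinLoef_random
  by (intro conjI I_of_antimono) blast+

end
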